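(* Let $A$ and $B$ be $(0,1)$ matrices with $A\neq B$, and let $k=\mathrm{rank}(A-B)$. Then the following are equivalent: (i) $A,B$ are Gram mates and $(A+B)(A-B)^T=0$. (ii) $A,B$ are Gram mates and $(A-B)^T(A+B)=0$. (iii) $B$ is obtained from $A$ by changing the signs of $k$ positive singular values (these $k$ positive singular values being the same as those of $\frac12(A-B)$). (iv) There exist $k$ right singular vectors $\mathbf v_1,\dots,\mathbf v_k$ of $A$ corresponding to positive singular values which form a basis of $\mathrm{Row}(A-B)$ and satisfy $(A+B)\mathbf v_i=0$ for all $i$ (these can be obtained from right singular vectors corresponding to the positive singular values of $\frac12(A-B)$). (v) There exist $k$ left singular vectors $\mathbf u_1,\dots,\mathbf u_k$ of $A$ corresponding to positive singular values which form a basis of $\mathrm{Col}(A-B)$ and satisfy $(A+B)^T\mathbf u_i=0$ for all $i$ (these can be obtained from left singular vectors corresponding to the positive singular values of $\frac12(A-B)$). (vi) $A,B$ are Gram mates and $A(A-B)^T$ is symmetric. (vii) $A,B$ are Gram mates and $A^T(A-B)$ is symmetric.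
   Context: Two $(0,1)$ matrices $A,B$ are Gram mates if $AA^T=BB^T$, $A^TA=B^TB$ and $A\neq B$. For an $m\times n$ real matrix $A$, "$B$ is obtained from $A$ by changing the signs of $k$ positive singular values" means: there are orthogonal $U$, $V$ and a rectangular diagonal $\Sigma$ with nonnegative diagonal entries with $A=U\Sigma V^T$, and a diagonal matrix $S$ with entries $\pm1$, exactly $k$ of them $-1$, each in a position $i$ with $\Sigma_{ii}>0$, such that $B=US\Sigma V^T$. *)

theory Defs
  imports "Jordan_Normal_Form.DL_Rank"
begin

definition zero_one_mat :: "real mat \<Rightarrow> bool" where
  "zero_one_mat A \<longleftrightarrow> (\<forall>i<dim_row A. \<forall>j<dim_col A. A $$ (i,j) = 0 \<or> A $$ (i,j) = 1)"

definition gram_mates :: "real mat \<Rightarrow> real mat \<Rightarrow> bool" where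
  "gram_mates A B \<longleftrightarrow> zero_one_mat A \<and> zero_one_mat B \<and>
     A * A\<^sup>T = B * B\<^sup>T \<and> A\<^sup>T * A = B\<^sup>T * B \<and> A \<noteq> B"

definition orthogonal_real_mat :: "nat \<Rightarrow> real mat \<Rightarrow> bool" where
  "orthogonal_real_mat n U \<longleftrightarrow> U \<in> carrier_mat n n \<and> U\<^sup>T * U = 1\<^sub>m n"

definition rect_diag_nonneg :: "nat \<Rightarrow> nat \<Rightarrow> real mat \<Rightarrow> bool" where
  "rect_diag_nonneg m n \<Sigma> \<longleftrightarrow> \<Sigma> \<in> carrier_mat m n \<and>
     (\<forall>i<m. \<forall>j<n. i \<noteq> j \<longrightarrow> \<Sigma> $$ (i,j) = 0) \<and>
     (\<forall>i<min m n. \<Sigma> $$ (i,i) \<ge> 0)"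

text \<open>B is obtained from the m x n matrix A by changing the signs of k positive singular values.\<close>
definition sign_change_sv :: "nat \<Rightarrow> nat \<Rightarrow> nat \<Rightarrow> real mat \<Rightarrow> real mat \<Rightarrow> bool" where
  "sign_change_sv m n k A B \<longleftrightarrow>
    (\<exists>U V \<Sigma> S. orthogonal_real_mat m U \<and> orthogonal_real_mat n V \<and> rect_diag_nonneg m n \<Sigma> \<and>
       A = U * \<Sigma> * V\<^sup>T \<and>
       S \<in> carrier_mat m m \<and> diagonal_mat S \<and> (\<forall>i<m. S $$ (i,i) = 1 \<or> S $$ (i,i) = -1) \<and>
       card {i. i < m \<and> S $$ (i,i) = -1} = k \<and>
       (\<forall>i<m. S $$ (i,i) = -1 \<longrightarrow> i < n \<and> \<Sigma> $$ (i,i) > 0) \<and>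
       B = U * S * \<Sigma> * V\<^sup>T)"

definition singular_triple :: "nat \<Rightarrow> nat \<Rightarrow> real mat \<Rightarrow> real \<Rightarrow> real vec \<Rightarrow> real vec \<Rightarrow> bool" where
  "singular_triple m n A \<sigma> u v \<longleftrightarrow> \<sigma> \<ge> 0 \<and> u \<in> carrier_vec m \<and> v \<in> carrier_vec n \<and>
     u \<bullet> u = 1 \<and> v \<bullet> v = 1 \<and> A *\<^sub>v v = \<sigma> \<cdot>\<^sub>v u \<and> A\<^sup>T *\<^sub>v u = \<sigma> \<cdot>\<^sub>v v"

definition right_singular_vector :: "nat \<Rightarrow> nat \<Rightarrow> real mat \<Rightarrow> real \<Rightarrow> real vec \<Rightarrow> bool" where
  "right_singular_vector m n A \<sigma> v \<longleftrightarrow> (\<exists>u. singular_triple m n A \<sigma> u v)"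

definition left_singular_vector :: "nat \<Rightarrow> nat \<Rightarrow> real mat \<Rightarrow> real \<Rightarrow> real vec \<Rightarrow> bool" where
  "left_singular_vector m n A \<sigma> u \<longleftrightarrow> (\<exists>v. singular_triple m n A \<sigma> u v)"

context vec_space
begin

definition is_basis_list :: "'a vec list \<Rightarrow> 'a vec set \<Rightarrow> bool" where
  "is_basis_list ws W \<longleftrightarrow> set ws \<subseteq> carrier_vec n \<and> distinct ws \<and>
     lin_indpt (set ws) \<and> span (set ws) = W"

end

end

theory Submission
  imports Defs "Jordan_Normal_Form.Spectral_Radius"
begin

(* Write C = A + B and D = A - B. For Gram mates, conditions (i), (ii), (vi) and (vii) all say
   that A B^T, equivalently A^T B, is symmetric: once C D^T = 0, the matrix D^T C is
   skew-symmetric and squares to zero, hence vanishes. So the row spaces, and the column spaces,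
   of C and D are orthogonal. The spectral theorem for C^T C - D^T D then gives an orthonormal
   basis of eigenvectors p of A^T A each killed by C or by D, i.e. with B p = -A p or B p = A p.
   Those with D p \<noteq> 0 form a basis of Row(A - B) of size rank(A - B), and completing the
   normalised images A p to an orthonormal basis yields a singular value decomposition of A in
   which B is A with the signs of exactly these singular values changed. Conversely, changing
   signs of singular values preserves A A^T and A^T A, and a basis of Row(A - B) of right singular
   vectors killed by C forces C D^T = 0 and A^T A = B^T B. Transposing gives the statements about
   left singular vectors. *)

section \<open>Orthonormal sets of real vectors\<close>

lemma real_scalar_prod_self_eq_0_iff:
  fixes v :: "real vec" assumes "v \<in> carrier_vec n"
  shows "v \<bullet> v = 0 \<longleftrightarrow> v = 0\<^sub>v n"
  using conjugate_square_eq_0_vec[OF assms] by simp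

lemma real_scalar_prod_self_ge_0: "0 \<le> v \<bullet> (v :: real vec)"
  using conjugate_square_ge_0_vec[of v] by simp

lemma real_scalar_prod_self_gt_0_iff:
  fixes v :: "real vec" assumes "v \<in> carrier_vec n"
  shows "v \<bullet> v > 0 \<longleftrightarrow> v \<noteq> 0\<^sub>v n"
  using conjugate_square_greater_0_vec[OF assms] by simp

lemma scalar_prod_normalize_self:
  fixes x :: "real vec" assumes "x \<in> carrier_vec n" "x \<noteq> 0\<^sub>v n"
  shows "((1 / sqrt (x \<bullet> x)) \<cdot>\<^sub>v x) \<bullet> ((1 / sqrt (x \<bullet> x)) \<cdot>\<^sub>v x) = 1"
proof -
  have "x \<bullet> x > 0" using real_scalar_prod_self_gt_0_iff[OF assms(1)] assms(2) by simp
  thus ?thesis using assms(1) by (simp add: field_simps)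
qed

lemma eq_of_minus_eq_0_vec:
  fixes a b :: "'a :: ab_group_add vec"
  assumes "a \<in> carrier_vec n" "b \<in> carrier_vec n" "a - b = 0\<^sub>v n"
  shows "a = b"
proof (rule eq_vecI)
  fix i assume i: "i < dim_vec b"
  have "(a - b) $ i = 0" using assms(3) i assms(2) by simp
  thus "a $ i = b $ i" using i assms(1,2) by simp
qed (use assms in auto)

definition orthonormal :: "nat \<Rightarrow> real vec set \<Rightarrow> bool" where
  "orthonormal n S \<longleftrightarrow> S \<subseteq> carrier_vec n \<and> (\<forall>u\<in>S. \<forall>v\<in>S. u \<bullet> v = (if u = v then 1 else 0))"

lemma orthonormal_subset: "orthonormal n S \<Longrightarrow> T \<subseteq> S \<Longrightarrow> orthonormal n T"
  unfolding orthonormal_def by blast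

lemma orthonormal_carrier: "orthonormal n S \<Longrightarrow> S \<subseteq> carrier_vec n"
  unfolding orthonormal_def by auto

lemma orthonormal_mat_of_cols:
  assumes "distinct rs" "orthonormal n (set rs)"
  shows "(mat_of_cols n rs)\<^sup>T * mat_of_cols n rs = 1\<^sub>m (length rs)"
proof (rule eq_matI)
  fix i j assume ij: "i < dim_row (1\<^sub>m (length rs))" "j < dim_col (1\<^sub>m (length rs))"
  have "rs ! i \<in> carrier_vec n" "rs ! j \<in> carrier_vec n"
    using assms(2) ij nth_mem unfolding orthonormal_def by auto
  moreover have "rs ! i \<bullet> rs ! j = (if i = j then 1 else 0)"
    using assms ij unfolding orthonormal_def by (auto simp: nth_eq_iff_index_eq)
  ultimately show "((mat_of_cols n rs)\<^sup>T * mat_of_cols n rs) $$ (i, j) = 1\<^sub>m (length rs) $$ (i, j)"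
    using ij by simp
qed auto

lemma orthogonal_real_mat_of_cols:
  assumes "distinct rs" "orthonormal n (set rs)" "length rs = n"
  shows "orthogonal_real_mat n (mat_of_cols n rs)"
  using orthonormal_mat_of_cols[OF assms(1,2)] assms(3) mat_of_cols_carrier(1)[of n rs]
  unfolding orthogonal_real_mat_def by simp

locale real_vec_space = vec_space "TYPE(real)" n for n :: nat

context real_vec_space
begin

lemma lincomb_scalar_prod:
  assumes "finite X" "X \<subseteq> carrier_vec n" "w \<in> carrier_vec n"
  shows "lincomb a X \<bullet> w = (\<Sum>u\<in>X. a u * (u \<bullet> w))"
  unfolding lincomb_def
  by (subst finsum_scalar_prod_sum) (use assms in \<open>auto intro!: sum.cong\<close>)

lemma orthogonal_lin_indpt:
  assumes W: "W \<subseteq> carrier_vec n" "0\<^sub>v n \<notin> W" "\<forall>u\<in>W. \<forall>v\<in>W. u \<noteq> v \<longrightarrow> u \<bullet> v = 0"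
  shows "lin_indpt W"
proof
  assume "lin_dep W"
  then obtain X a v where X: "finite X" "X \<subseteq> W" "lincomb a X = 0\<^sub>v n" "v \<in> X" "a v \<noteq> 0"
    unfolding lin_dep_def by auto
  have v: "v \<in> carrier_vec n" using X W by auto
  have "0 = lincomb a X \<bullet> v" using X W by auto
  also have "\<dots> = (\<Sum>u\<in>X. a u * (u \<bullet> v))" by (rule lincomb_scalar_prod) (use X W in auto)
  also have "\<dots> = (\<Sum>u\<in>X. if u = v then a v * (v \<bullet> v) else 0)"
    using X W by (intro sum.cong) auto
  also have "\<dots> = a v * (v \<bullet> v)" using X by simp
  finally have "a v * (v \<bullet> v) = 0" by simp
  moreover have "v \<bullet> v \<noteq> 0" using real_scalar_prod_self_eq_0_iff[OF v] X W by auto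
  ultimately show False using X by simp
qed

lemma orthonormal_lin_indpt:
  assumes "orthonormal n S" shows "lin_indpt S"
proof (rule orthogonal_lin_indpt)
  show "0\<^sub>v n \<notin> S"
  proof
    assume "0\<^sub>v n \<in> S"
    hence "0\<^sub>v n \<bullet> 0\<^sub>v n = (1 :: real)" using assms unfolding orthonormal_def by auto
    thus False by simp
  qed
qed (use assms in \<open>auto simp: orthonormal_def\<close>)

lemma orthonormal_finite: "orthonormal n S \<Longrightarrow> finite S"
  using li_le_dim(1)[OF fin_dim orthonormal_carrier orthonormal_lin_indpt] by simp

lemma orthonormal_card_le: "orthonormal n S \<Longrightarrow> card S \<le> n"
  using li_le_dim(2)[OF fin_dim orthonormal_carrier orthonormal_lin_indpt] dim_is_n by simp

lemma dim_span_lin_indpt: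
  assumes "finite X" "X \<subseteq> carrier_vec n" "lin_indpt X"
  shows "vectorspace.dim class_ring (span_vs X) = card X"
proof -
  have "maximal X (\<lambda>T. T \<subseteq> X \<and> lin_indpt T)"
    using assms unfolding maximal_def by auto
  from dim_span[OF _ assms(1) this] assms(2) show ?thesis by simp
qed

lemma lincomb_orthonormal_scalar_prod:
  assumes "orthonormal n S" "u \<in> S"
  shows "lincomb (\<lambda>v. x \<bullet> v) S \<bullet> u = x \<bullet> u"
proof -
  have S: "S \<subseteq> carrier_vec n" "finite S"
    using orthonormal_carrier[OF assms(1)] orthonormal_finite[OF assms(1)] by auto
  have "lincomb (\<lambda>v. x \<bullet> v) S \<bullet> u = (\<Sum>v\<in>S. (x \<bullet> v) * (v \<bullet> u))"
    by (rule lincomb_scalar_prod) (use S assms in auto)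
  also have "\<dots> = (\<Sum>v\<in>S. if v = u then x \<bullet> u else 0)"
    using assms by (intro sum.cong) (auto simp: orthonormal_def)
  also have "\<dots> = x \<bullet> u" using S assms by simp
  finally show ?thesis .
qed

lemma orthonormal_residual_perp:
  assumes "orthonormal n S" "x \<in> carrier_vec n" "u \<in> S"
  shows "(x - lincomb (\<lambda>v. x \<bullet> v) S) \<bullet> u = 0"
proof -
  have l: "lincomb (\<lambda>v. x \<bullet> v) S \<in> carrier_vec n" and u: "u \<in> carrier_vec n"
    using assms orthonormal_carrier[OF assms(1)] orthonormal_finite[OF assms(1)] by auto
  show ?thesis unfolding minus_scalar_prod_distrib[OF assms(2) l u]
    lincomb_orthonormal_scalar_prod[OF assms(1,3)] by simp
qed

lemma exists_unit_perp_orthonormal: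
  assumes "orthonormal n S" "card S < n"
  shows "\<exists>v\<in>carrier_vec n. v \<bullet> v = 1 \<and> (\<forall>u\<in>S. u \<bullet> v = 0)"
proof -
  have S: "S \<subseteq> carrier_vec n" "finite S"
    using orthonormal_carrier[OF assms(1)] orthonormal_finite[OF assms(1)] by auto
  have "span S \<noteq> carrier_vec n"
    using gen_ge_dim[OF S(2)] S(1) dim_is_n assms(2) by auto
  moreover have "span S \<subseteq> carrier_vec n" using span_is_subset2[of S] S by auto
  ultimately obtain x where x: "x \<in> carrier_vec n" "x \<notin> span S" by blast
  let ?l = "lincomb (\<lambda>v. x \<bullet> v) S"
  have l: "?l \<in> carrier_vec n" "?l \<in> span S" using S by (auto intro: lincomb_closed in_spanI)
  define y where "y = x - ?l"
  have y: "y \<in> carrier_vec n" unfolding y_def using x l by auto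
  have y0: "y \<noteq> 0\<^sub>v n"
    using eq_of_minus_eq_0_vec[OF x(1) l(1)] x(2) l(2) unfolding y_def by auto
  have yperp: "u \<bullet> y = 0" if "u \<in> S" for u
  proof -
    have "u \<bullet> y = y \<bullet> u" using S that by (intro comm_scalar_prod[OF _ y]) auto
    thus ?thesis using orthonormal_residual_perp[OF assms(1) x(1) that] unfolding y_def by simp
  qed
  define v where "v = (1 / sqrt (y \<bullet> y)) \<cdot>\<^sub>v y"
  have "v \<in> carrier_vec n" "v \<bullet> v = 1" "\<forall>u\<in>S. u \<bullet> v = 0"
    unfolding v_def using y scalar_prod_normalize_self[OF y y0] yperp S by auto
  thus ?thesis by blast
qed

lemma orthonormal_extend:
  assumes "orthonormal n S"
  shows "\<exists>T. S \<subseteq> T \<and> orthonormal n T \<and> card T = n"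
  using assms
proof (induction "n - card S" arbitrary: S)
  case 0
  then show ?case using orthonormal_card_le[OF 0(2)] by auto
next
  case (Suc k)
  have S: "S \<subseteq> carrier_vec n" "finite S"
    using orthonormal_carrier[OF Suc(3)] orthonormal_finite[OF Suc(3)] by auto
  have "card S < n" using Suc(2) by simp
  then obtain v where v: "v \<in> carrier_vec n" "v \<bullet> v = 1" "\<forall>u\<in>S. u \<bullet> v = 0"
    using exists_unit_perp_orthonormal[OF Suc(3)] by auto
  have vS: "v \<notin> S" using v by force
  have "v \<bullet> u = 0" if "u \<in> S" for u
    using comm_scalar_prod[OF v(1), of u] v(3) S that by auto
  hence "orthonormal n (insert v S)"
    using Suc(3) v S vS unfolding orthonormal_def by auto
  moreover have "k = n - card (insert v S)" using Suc(2) vS S by simp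
  ultimately show ?case using Suc(1) by blast
qed

lemma orthonormal_basis_perp_eq_0:
  assumes "orthonormal n S" "card S = n" "w \<in> carrier_vec n" "\<forall>t\<in>S. w \<bullet> t = 0"
  shows "w = 0\<^sub>v n"
proof -
  have S: "S \<subseteq> carrier_vec n" "finite S"
    using orthonormal_carrier[OF assms(1)] orthonormal_finite[OF assms(1)] by auto
  have "basis S"
    using dim_li_is_basis[OF fin_dim S(2,1) orthonormal_lin_indpt[OF assms(1)]] assms(2) dim_is_n
    by simp
  hence "w \<in> span S" using assms(3) unfolding basis_def by auto
  then obtain b X where X: "w = lincomb b X" "finite X" "X \<subseteq> S" using in_spanE by blast
  have "w \<bullet> w = (\<Sum>u\<in>X. b u * (u \<bullet> w))"
    unfolding X(1) by (rule lincomb_scalar_prod) (use X S assms in auto)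
  also have "\<dots> = 0"
  proof (intro sum.neutral ballI)
    fix u assume u: "u \<in> X"
    hence "u \<bullet> w = w \<bullet> u" using X S by (intro comm_scalar_prod[OF _ assms(3)]) auto
    thus "b u * (u \<bullet> w) = 0" using assms(4) u X by auto
  qed
  finally show ?thesis using real_scalar_prod_self_eq_0_iff[OF assms(3)] by simp
qed

lemma orthonormal_basis_span_subset:
  assumes S: "orthonormal n S" "card S = n" and T: "T \<subseteq> S" and w: "w \<in> carrier_vec n"
    and perp: "\<forall>p\<in>S - T. w \<bullet> p = 0"
  shows "w \<in> span T"
proof -
  have TO: "orthonormal n T" using orthonormal_subset[OF S(1) T] .
  have Tc: "T \<subseteq> carrier_vec n" "finite T"
    using orthonormal_carrier[OF TO] orthonormal_finite[OF TO] by auto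
  let ?l = "lincomb (\<lambda>v. w \<bullet> v) T"
  have l: "?l \<in> carrier_vec n" using Tc by (intro lincomb_closed) auto
  have "w - ?l = 0\<^sub>v n"
  proof (rule orthonormal_basis_perp_eq_0[OF S])
    show "w - ?l \<in> carrier_vec n" using w l by auto
    show "\<forall>t\<in>S. (w - ?l) \<bullet> t = 0"
    proof
      fix t assume t: "t \<in> S"
      show "(w - ?l) \<bullet> t = 0"
      proof (cases "t \<in> T")
        case True
        thus ?thesis using orthonormal_residual_perp[OF TO w] by simp
      next
        case False
        have tc: "t \<in> carrier_vec n" using t orthonormal_carrier[OF S(1)] by auto
        have "?l \<bullet> t = (\<Sum>v\<in>T. (w \<bullet> v) * (v \<bullet> t))" by (rule lincomb_scalar_prod) (use Tc tc in auto)
        also have "\<dots> = 0"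
        proof (intro sum.neutral ballI)
          fix v assume "v \<in> T"
          hence "v \<bullet> t = 0" using S(1) T t False unfolding orthonormal_def by auto
          thus "(w \<bullet> v) * (v \<bullet> t) = 0" by simp
        qed
        finally show ?thesis using minus_scalar_prod_distrib[OF w l tc] perp t False by simp
      qed
    qed
  qed
  hence "w = ?l" using eq_of_minus_eq_0_vec[OF w l] by simp
  thus ?thesis using Tc by (auto intro: in_spanI)
qed

end

section \<open>The spectral theorem for real symmetric matrices\<close>

lemma real_symmetric_has_eigenvalue:
  fixes M :: "real mat" assumes M: "M \<in> carrier_mat r r" "0 < r" "M\<^sup>T = M"
  shows "\<exists>l. eigenvalue M l"
proof -
  let ?Mc = "map_mat complex_of_real M"
  have Mc: "?Mc \<in> carrier_mat r r" using M by auto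
  from spectrum_non_empty[OF Mc M(2)] obtain z where "eigenvalue ?Mc z"
    unfolding spectrum_def by auto
  then obtain w where w: "w \<in> carrier_vec r" "w \<noteq> 0\<^sub>v r" "?Mc *\<^sub>v w = z \<cdot>\<^sub>v w"
    unfolding eigenvalue_def eigenvector_def using Mc by auto
  have Msym: "M $$ (i,j) = M $$ (j,i)" if "i < r" "j < r" for i j
    using M that by (metis carrier_matD index_transpose_mat(1))
  (* The Rayleigh quotient z = q / s of the complex eigenvector w is real because M is real symmetric. *)
  define q where "q = (\<Sum>i\<in>{0..<r}. cnj (w$i) * (?Mc *\<^sub>v w)$i)"
  define s where "s = (\<Sum>i\<in>{0..<r}. cnj (w$i) * w$i)"
  have q1: "q = z * s" unfolding q_def s_def w(3) using w(1)
    by (auto simp: sum_distrib_left ac_simps intro!: sum.cong)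
  have q2: "q = (\<Sum>i\<in>{0..<r}. \<Sum>j\<in>{0..<r}. cnj (w$i) * of_real (M$$(i,j)) * w$j)"
    unfolding q_def using w(1) M
    by (auto simp: scalar_prod_def sum_distrib_left ac_simps intro!: sum.cong)
  have "cnj q = (\<Sum>i\<in>{0..<r}. \<Sum>j\<in>{0..<r}. w$i * of_real (M$$(i,j)) * cnj (w$j))"
    unfolding q2 by (simp add: cnj_sum)
  also have "\<dots> = (\<Sum>j\<in>{0..<r}. \<Sum>i\<in>{0..<r}. w$i * of_real (M$$(i,j)) * cnj (w$j))"
    by (rule sum.swap)
  also have "\<dots> = q" unfolding q2 using Msym
    by (auto simp: ac_simps intro!: sum.cong)
  finally have qr: "q \<in> \<real>" using Reals_cnj_iff by blast
  have sr: "s \<in> \<real>" unfolding s_def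
    by (intro sum_in_Reals) (metis Reals_of_real complex_norm_square mult.commute)
  have "w \<bullet>c w = s" unfolding s_def scalar_prod_def using w(1)
    by (auto simp: ac_simps intro!: sum.cong)
  moreover have "w \<bullet>c w \<noteq> 0" using w(1,2) by simp
  ultimately have "s \<noteq> 0" by simp
  hence "z \<in> \<real>" using q1 qr sr by (metis nonzero_mult_div_cancel_right Reals_divide)
  then obtain l where zl: "z = of_real l" using Reals_cases by blast
  have "poly (char_poly ?Mc) z = 0"
    using \<open>eigenvalue ?Mc z\<close> eigenvalue_root_char_poly[OF Mc] by simp
  also have "char_poly ?Mc = map_poly of_real (char_poly M)"
    using of_real_hom.char_poly_hom[OF M(1)] by simp
  finally have "poly (char_poly M) l = 0" unfolding zl of_real_hom.poly_map_poly by simp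
  thus ?thesis using eigenvalue_root_char_poly[OF M(1)] by blast
qed

lemma transpose_mat_of_cols_mult_vec:
  assumes "set rs \<subseteq> carrier_vec n" "z \<in> carrier_vec n"
  shows "(mat_of_cols n rs)\<^sup>T *\<^sub>v z = vec (length rs) (\<lambda>j. rs ! j \<bullet> z)"
proof (rule eq_vecI)
  fix i assume "i < dim_vec (vec (length rs) (\<lambda>j. rs ! j \<bullet> z))"
  hence i: "i < length rs" by simp
  have "rs ! i \<in> carrier_vec n" using assms(1) nth_mem[OF i] by blast
  thus "((mat_of_cols n rs)\<^sup>T *\<^sub>v z) $ i = vec (length rs) (\<lambda>j. rs ! j \<bullet> z) $ i"
    using i assms by simp
qed simp

context real_vec_space
begin

lemma orthonormal_complement_projection:
  assumes T: "orthonormal n T" "card T = n" "S \<subseteq> T" and rs: "distinct rs" "set rs = T - S"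
    and z: "z \<in> carrier_vec n" "\<forall>s\<in>S. s \<bullet> z = 0"
  defines "Q \<equiv> mat_of_cols n rs"
  shows "Q *\<^sub>v (Q\<^sup>T *\<^sub>v z) = z"
proof -
  let ?r = "length rs"
  have Tc: "T \<subseteq> carrier_vec n" using orthonormal_carrier[OF T(1)] .
  have rsc: "set rs \<subseteq> carrier_vec n" using rs Tc by auto
  have Q: "Q \<in> carrier_mat n ?r" unfolding Q_def by simp
  have QT: "Q\<^sup>T *\<^sub>v x = vec ?r (\<lambda>j. rs ! j \<bullet> x)" if "x \<in> carrier_vec n" for x
    unfolding Q_def using transpose_mat_of_cols_mult_vec[OF rsc that] .
  let ?p = "Q *\<^sub>v (Q\<^sup>T *\<^sub>v z)"
  have p: "?p \<in> carrier_vec n" using Q z by auto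
  have "z - ?p = 0\<^sub>v n"
  proof (rule orthonormal_basis_perp_eq_0[OF T(1,2)])
    show "z - ?p \<in> carrier_vec n" using z p by auto
    show "\<forall>t\<in>T. (z - ?p) \<bullet> t = 0"
    proof
      fix t assume t: "t \<in> T"
      hence tc: "t \<in> carrier_vec n" using Tc by auto
      have pt: "?p \<bullet> t = (Q\<^sup>T *\<^sub>v t) \<bullet> (Q\<^sup>T *\<^sub>v z)"
        using transpose_vec_mult_scalar[OF Q _ tc, of "Q\<^sup>T *\<^sub>v z"] comm_scalar_prod[OF p tc] Q z
        by simp
      have zt: "z \<bullet> t = t \<bullet> z" by (rule comm_scalar_prod[OF z(1) tc])
      show "(z - ?p) \<bullet> t = 0"
      proof (cases "t \<in> S")
        case True
        have "rs ! j \<bullet> t = 0" if "j < ?r" for j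
          using T(1,3) True rs nth_mem[OF that] unfolding orthonormal_def by auto
        hence "Q\<^sup>T *\<^sub>v t = 0\<^sub>v ?r" unfolding QT[OF tc] by auto
        thus ?thesis using minus_scalar_prod_distrib[OF z(1) p tc] pt zt z True Q by simp
      next
        case False
        then obtain i where i: "i < ?r" "t = rs ! i" using rs t by (metis DiffI in_set_conv_nth)
        have "rs ! j \<bullet> t = (if j = i then 1 else 0)" if "j < ?r" for j
          using T(1) rs i that nth_mem[OF that] nth_mem[OF i(1)] unfolding orthonormal_def
          by (auto simp: nth_eq_iff_index_eq)
        hence "Q\<^sup>T *\<^sub>v t = unit_vec ?r i" unfolding QT[OF tc] using i(1) by (intro eq_vecI) auto
        hence "?p \<bullet> t = t \<bullet> z" using pt QT[OF z(1)] i Q z by simp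
        thus ?thesis using minus_scalar_prod_distrib[OF z(1) p tc] zt by simp
      qed
    qed
  qed
  thus ?thesis using eq_of_minus_eq_0_vec[OF z(1) p] by simp
qed

lemma orthonormal_complement_list:
  assumes S: "orthonormal n S" "card S < n"
  shows "\<exists>rs. 0 < length rs \<and> distinct rs \<and> orthonormal n (set rs)
    \<and> (\<forall>s\<in>S. (mat_of_cols n rs)\<^sup>T *\<^sub>v s = 0\<^sub>v (length rs))
    \<and> (\<forall>z\<in>carrier_vec n. (\<forall>s\<in>S. s \<bullet> z = 0) \<longrightarrow> mat_of_cols n rs *\<^sub>v ((mat_of_cols n rs)\<^sup>T *\<^sub>v z) = z)"
proof -
  obtain T where T: "S \<subseteq> T" "orthonormal n T" "card T = n" using orthonormal_extend[OF S(1)] by blast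
  have Tf: "finite T" using orthonormal_finite[OF T(2)] .
  obtain rs where rs: "set rs = T - S" "distinct rs" using finite_distinct_list[of "T - S"] Tf by auto
  have "length rs = n - card S"
    using distinct_card[OF rs(2)] rs(1) T Tf by (simp add: card_Diff_subset finite_subset)
  moreover have "(mat_of_cols n rs)\<^sup>T *\<^sub>v s = 0\<^sub>v (length rs)" if s: "s \<in> S" for s
  proof -
    have sc: "s \<in> carrier_vec n" using s T orthonormal_carrier[OF T(2)] by auto
    have "rs ! j \<bullet> s = 0" if "j < length rs" for j
      using T rs s nth_mem[OF that] unfolding orthonormal_def by auto
    moreover have "(mat_of_cols n rs)\<^sup>T *\<^sub>v s = vec (length rs) (\<lambda>j. rs ! j \<bullet> s)"
      by (rule transpose_mat_of_cols_mult_vec) (use rs orthonormal_carrier[OF T(2)] sc in auto)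
    ultimately show ?thesis by auto
  qed
  moreover have "orthonormal n (set rs)" using orthonormal_subset[OF T(2)] rs(1) by auto
  ultimately show ?thesis
    using S(2) rs(2) orthonormal_complement_projection[OF T(2,3,1) rs(2,1)] by (intro exI[of _ rs]) auto
qed

lemma symmetric_eigenvector_perp:
  assumes M: "M \<in> carrier_mat n n" "M\<^sup>T = M"
    and S: "orthonormal n S" "\<forall>s\<in>S. \<exists>l. M *\<^sub>v s = l \<cdot>\<^sub>v s" "card S < n"
  shows "\<exists>v\<in>carrier_vec n. v \<bullet> v = 1 \<and> (\<forall>u\<in>S. u \<bullet> v = 0) \<and> (\<exists>l. M *\<^sub>v v = l \<cdot>\<^sub>v v)"
proof -
  obtain rs where r0: "0 < length rs" and rs: "distinct rs" "orthonormal n (set rs)"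
    and QTS: "\<forall>s\<in>S. (mat_of_cols n rs)\<^sup>T *\<^sub>v s = 0\<^sub>v (length rs)"
    and proj: "\<forall>z\<in>carrier_vec n. (\<forall>s\<in>S. s \<bullet> z = 0) \<longrightarrow> mat_of_cols n rs *\<^sub>v ((mat_of_cols n rs)\<^sup>T *\<^sub>v z) = z"
    using orthonormal_complement_list[OF S(1,3)] by blast
  define r where "r = length rs"
  define Q where "Q = mat_of_cols n rs"
  have Sc: "S \<subseteq> carrier_vec n" using orthonormal_carrier[OF S(1)] .
  have Q: "Q \<in> carrier_mat n r" and QT: "Q\<^sup>T \<in> carrier_mat r n" unfolding Q_def r_def by auto
  have QTQ: "Q\<^sup>T * Q = 1\<^sub>m r" unfolding Q_def r_def using orthonormal_mat_of_cols[OF rs] .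
  (* An eigenvector y of the compression Q^T M Q of M to the complement of S yields one of M. *)
  define M' where "M' = Q\<^sup>T * M * Q"
  have M': "M' \<in> carrier_mat r r" unfolding M'_def using Q M by auto
  have MQ: "M * Q \<in> carrier_mat n r" using M Q by auto
  have M'_eq: "M' = Q\<^sup>T * (M * Q)" unfolding M'_def using assoc_mult_mat[OF QT M(1) Q] .
  hence "M'\<^sup>T = (M * Q)\<^sup>T * Q\<^sup>T\<^sup>T"
    using transpose_mult[OF QT, of "M * Q" r] M Q by (simp del: transpose_transpose)
  also have "(M * Q)\<^sup>T = Q\<^sup>T * M\<^sup>T" by (rule transpose_mult[OF M(1) Q])
  finally have M'sym: "M'\<^sup>T = M'" using M unfolding M'_def by simp
  obtain l y where y: "y \<in> carrier_vec r" "y \<noteq> 0\<^sub>v r" "M' *\<^sub>v y = l \<cdot>\<^sub>v y"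
    using real_symmetric_has_eigenvalue[OF M' r0[folded r_def] M'sym] M'
    unfolding eigenvalue_def eigenvector_def by auto
  define x where "x = Q *\<^sub>v y"
  have x: "x \<in> carrier_vec n" unfolding x_def using Q y by auto
  have "Q\<^sup>T *\<^sub>v x = y" unfolding x_def
    using assoc_mult_mat_vec[OF QT Q y(1), symmetric] QTQ y by auto
  hence x0: "x \<noteq> 0\<^sub>v n" using y QT by auto
  have xperp: "s \<bullet> x = 0" if s: "s \<in> S" for s
    using transpose_vec_mult_scalar[OF Q y(1), of s] QTS s Sc y(1) unfolding x_def Q_def r_def by auto
  have Mxperp: "s \<bullet> (M *\<^sub>v x) = 0" if s: "s \<in> S" for s
  proof -
    have sc: "s \<in> carrier_vec n" using s Sc by auto
    obtain ls where "M *\<^sub>v s = ls \<cdot>\<^sub>v s" using S(2) s by blast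
    hence "s \<bullet> (M *\<^sub>v x) = ls * (s \<bullet> x)"
      using transpose_vec_mult_scalar[OF M(1) x sc] M(2) sc x by simp
    thus ?thesis using xperp[OF s] by simp
  qed
  have "M *\<^sub>v x = Q *\<^sub>v (Q\<^sup>T *\<^sub>v (M *\<^sub>v x))" using proj M x Mxperp unfolding Q_def by auto
  also have "Q\<^sup>T *\<^sub>v (M *\<^sub>v x) = M' *\<^sub>v y"
    unfolding M'_eq x_def using assoc_mult_mat_vec[OF QT MQ y(1)] M Q y(1) by simp
  finally have Mx: "M *\<^sub>v x = l \<cdot>\<^sub>v x" unfolding y(3) x_def using mult_mat_vec[OF Q y(1)] by simp
  define v where "v = (1 / sqrt (x \<bullet> x)) \<cdot>\<^sub>v x"
  have "v \<in> carrier_vec n" "v \<bullet> v = 1" "\<forall>u\<in>S. u \<bullet> v = 0" "M *\<^sub>v v = l \<cdot>\<^sub>v v"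
    unfolding v_def using x scalar_prod_normalize_self[OF x x0] xperp Sc
      mult_mat_vec[OF M(1) x] Mx by (auto simp: smult_smult_assoc mult.commute)
  thus ?thesis by blast
qed

theorem symmetric_orthonormal_eigenbasis:
  assumes M: "M \<in> carrier_mat n n" "M\<^sup>T = M"
  shows "\<exists>S. orthonormal n S \<and> card S = n \<and> (\<forall>s\<in>S. \<exists>l. M *\<^sub>v s = l \<cdot>\<^sub>v s)"
proof -
  have "\<exists>S. orthonormal n S \<and> card S = k \<and> (\<forall>s\<in>S. \<exists>l. M *\<^sub>v s = l \<cdot>\<^sub>v s)" if "k \<le> n" for k
    using that
  proof (induction k)
    case 0
    show ?case by (rule exI[of _ "{}"]) (auto simp: orthonormal_def)
  next
    case (Suc k)
    then obtain S where S: "orthonormal n S" "card S = k" "\<forall>s\<in>S. \<exists>l. M *\<^sub>v s = l \<cdot>\<^sub>v s" by auto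
    obtain v where v: "v \<in> carrier_vec n" "v \<bullet> v = 1" "\<forall>u\<in>S. u \<bullet> v = 0" "\<exists>l. M *\<^sub>v v = l \<cdot>\<^sub>v v"
      using symmetric_eigenvector_perp[OF M S(1,3)] Suc(2) S(2) by auto
    have vS: "v \<notin> S" using v by force
    have "v \<bullet> u = 0" if "u \<in> S" for u
      using comm_scalar_prod[OF v(1), of u] v(3) orthonormal_carrier[OF S(1)] that by auto
    hence "orthonormal n (insert v S)" using S(1) v vS unfolding orthonormal_def by auto
    thus ?case using S v vS orthonormal_finite[OF S(1)] by (intro exI[of _ "insert v S"]) auto
  qed
  thus ?thesis by blast
qed

end

section \<open>Row space and rank from an eigenbasis\<close>

context real_vec_space
begin

lemma gram_orthonormal_eigenbasis:
  fixes D :: "real mat" assumes D: "D \<in> carrier_mat m n"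
  shows "\<exists>S. orthonormal n S \<and> card S = n \<and> (\<forall>p\<in>S. \<exists>\<nu>. D\<^sup>T *\<^sub>v (D *\<^sub>v p) = \<nu> \<cdot>\<^sub>v p)"
proof -
  have "(D\<^sup>T * D)\<^sup>T = D\<^sup>T * D" using transpose_mult[of "D\<^sup>T" n m D n] D by simp
  then obtain S where S: "orthonormal n S" "card S = n" "\<forall>s\<in>S. \<exists>l. (D\<^sup>T * D) *\<^sub>v s = l \<cdot>\<^sub>v s"
    using symmetric_orthonormal_eigenbasis[of "D\<^sup>T * D"] D by auto
  have "(D\<^sup>T * D) *\<^sub>v p = D\<^sup>T *\<^sub>v (D *\<^sub>v p)" if "p \<in> S" for p
    using assoc_mult_mat_vec[of "D\<^sup>T" n m D n p] D orthonormal_carrier[OF S(1)] that by auto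
  thus ?thesis using S by metis
qed

lemma orthogonal_projection_residual_perp:
  assumes W: "finite W" "W \<subseteq> carrier_vec n" "0\<^sub>v n \<notin> W" "\<forall>u\<in>W. \<forall>v\<in>W. u \<noteq> v \<longrightarrow> u \<bullet> v = 0"
    and y: "y \<in> carrier_vec n" and w0: "w0 \<in> W"
  shows "(y - lincomb (\<lambda>w. (y \<bullet> w) / (w \<bullet> w)) W) \<bullet> w0 = 0"
proof -
  let ?l = "lincomb (\<lambda>w. (y \<bullet> w) / (w \<bullet> w)) W"
  have w0c: "w0 \<in> carrier_vec n" and l: "?l \<in> carrier_vec n" using W w0 by auto
  have nz: "w0 \<bullet> w0 \<noteq> 0" using real_scalar_prod_self_eq_0_iff[OF w0c] W w0 by auto
  have "?l \<bullet> w0 = (\<Sum>u\<in>W. (y \<bullet> u) / (u \<bullet> u) * (u \<bullet> w0))"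
    by (rule lincomb_scalar_prod) (use W w0c in auto)
  also have "\<dots> = (\<Sum>u\<in>W. if u = w0 then y \<bullet> w0 else 0)"
    using W w0 nz by (intro sum.cong) auto
  also have "\<dots> = y \<bullet> w0" using W w0 by simp
  finally show ?thesis using minus_scalar_prod_distrib[OF y l w0c] by simp
qed

lemma gram_eigenvector_in_row_space:
  fixes D :: "real mat"
  assumes D: "D \<in> carrier_mat m n" and p: "p \<in> carrier_vec n"
    and ev: "D\<^sup>T *\<^sub>v (D *\<^sub>v p) = \<nu> \<cdot>\<^sub>v p" and nz: "D *\<^sub>v p \<noteq> 0\<^sub>v m"
  shows "p \<in> row_space D"
proof -
  have Dp: "D *\<^sub>v p \<in> carrier_vec m" using D p by auto
  have "(D *\<^sub>v p) \<bullet> (D *\<^sub>v p) = \<nu> * (p \<bullet> p)"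
    using transpose_vec_mult_scalar[OF D p Dp] ev p by simp
  hence "\<nu> \<noteq> 0" using real_scalar_prod_self_eq_0_iff[OF Dp] nz by auto
  have "D\<^sup>T *\<^sub>v ((1 / \<nu>) \<cdot>\<^sub>v (D *\<^sub>v p)) = (1 / \<nu>) \<cdot>\<^sub>v (D\<^sup>T *\<^sub>v (D *\<^sub>v p))"
    using mult_mat_vec[of "D\<^sup>T" n m "D *\<^sub>v p"] D Dp by auto
  also have "\<dots> = p" unfolding ev using \<open>\<nu> \<noteq> 0\<close> by (simp add: smult_smult_assoc)
  finally show ?thesis using row_space_eq[OF D] D p Dp by auto
qed

lemma row_space_eq_span_eigenbasis:
  fixes D :: "real mat"
  assumes D: "D \<in> carrier_mat m n" and S: "orthonormal n S" "card S = n"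
    and ev: "\<forall>p\<in>S. \<exists>\<nu>. D\<^sup>T *\<^sub>v (D *\<^sub>v p) = \<nu> \<cdot>\<^sub>v p"
  shows "row_space D = span {p\<in>S. D *\<^sub>v p \<noteq> 0\<^sub>v m}"
proof
  let ?T = "{p\<in>S. D *\<^sub>v p \<noteq> 0\<^sub>v m}"
  have Sc: "S \<subseteq> carrier_vec n" using orthonormal_carrier[OF S(1)] .
  have "?T \<subseteq> row_space D" using gram_eigenvector_in_row_space[OF D] ev Sc by blast
  moreover have "set (rows D) \<subseteq> carrier_vec n" using D rows_carrier[of D] by auto
  ultimately show "span ?T \<subseteq> row_space D"
    using span_subsetI unfolding row_space_def by blast
  show "row_space D \<subseteq> span ?T"
  proof
    fix w assume "w \<in> row_space D"
    then obtain y where y: "y \<in> carrier_vec m" "w = D\<^sup>T *\<^sub>v y" and w: "w \<in> carrier_vec n"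
      unfolding row_space_eq[OF D] using D by auto
    have "w \<bullet> p = 0" if "p \<in> S - ?T" for p
      using that Sc transpose_vec_mult_scalar[OF D _ y(1), of p] y by auto
    thus "w \<in> span ?T" using orthonormal_basis_span_subset[OF S _ w] by auto
  qed
qed

lemma rank_transpose_eq_card_eigenbasis:
  fixes D :: "real mat"
  assumes D: "D \<in> carrier_mat m n" and S: "orthonormal n S" "card S = n"
    and ev: "\<forall>p\<in>S. \<exists>\<nu>. D\<^sup>T *\<^sub>v (D *\<^sub>v p) = \<nu> \<cdot>\<^sub>v p"
  shows "rank D\<^sup>T = card {p\<in>S. D *\<^sub>v p \<noteq> 0\<^sub>v m}"
proof -
  let ?T = "{p\<in>S. D *\<^sub>v p \<noteq> 0\<^sub>v m}"
  have TO: "orthonormal n ?T" using orthonormal_subset[OF S(1)] by auto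
  have "rank D\<^sup>T = vectorspace.dim class_ring (span_vs (set (rows D)))"
    unfolding rank_def by simp
  also have "span (set (rows D)) = span ?T"
    using row_space_eq_span_eigenbasis[OF D S ev] unfolding row_space_def .
  also have "vectorspace.dim class_ring (span_vs ?T) = card ?T"
    using dim_span_lin_indpt orthonormal_finite[OF TO] orthonormal_carrier[OF TO]
      orthonormal_lin_indpt[OF TO] by simp
  finally show ?thesis .
qed

end

lemma image_perp_eigenbasis_eq_0:
  fixes D :: "real mat"
  assumes D: "D \<in> carrier_mat m n" and S: "orthonormal n S" "card S = n"
    and x: "x \<in> carrier_vec n" and z: "z = D *\<^sub>v x"
    and perp: "\<forall>t\<in>S. D *\<^sub>v t \<noteq> 0\<^sub>v m \<longrightarrow> z \<bullet> (D *\<^sub>v t) = 0"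
  shows "z = 0\<^sub>v m"
proof -
  interpret N: real_vec_space n .
  have zc: "z \<in> carrier_vec m" using z D x by auto
  have "(D\<^sup>T *\<^sub>v z) \<bullet> t = 0" if t: "t \<in> S" for t
  proof -
    have "(D\<^sup>T *\<^sub>v z) \<bullet> t = z \<bullet> (D *\<^sub>v t)"
      using transpose_vec_mult_scalar[OF D _ zc] t orthonormal_carrier[OF S(1)] by auto
    thus ?thesis using perp t zc by (cases "D *\<^sub>v t = 0\<^sub>v m") auto
  qed
  hence "D\<^sup>T *\<^sub>v z = 0\<^sub>v n" using N.orthonormal_basis_perp_eq_0[OF S] D zc by auto
  hence "z \<bullet> z = 0" using transpose_vec_mult_scalar[OF D x zc] z x by auto
  thus ?thesis using real_scalar_prod_self_eq_0_iff[OF zc] by simp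
qed

lemma eigenbasis_images_orthogonal:
  fixes D :: "real mat"
  assumes D: "D \<in> carrier_mat m n" and S: "orthonormal n S"
    and ev: "\<forall>p\<in>S. \<exists>\<nu>. D\<^sup>T *\<^sub>v (D *\<^sub>v p) = \<nu> \<cdot>\<^sub>v p"
    and pq: "p \<in> S" "q \<in> S" "p \<noteq> q"
  shows "(D *\<^sub>v p) \<bullet> (D *\<^sub>v q) = 0"
proof -
  have pc: "p \<in> carrier_vec n" and qc: "q \<in> carrier_vec n" using orthonormal_carrier[OF S] pq by auto
  obtain \<nu> where "D\<^sup>T *\<^sub>v (D *\<^sub>v p) = \<nu> \<cdot>\<^sub>v p" using ev pq by auto
  hence "(D *\<^sub>v p) \<bullet> (D *\<^sub>v q) = \<nu> * (p \<bullet> q)"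
    using transpose_vec_mult_scalar[OF D qc, of "D *\<^sub>v p"] D pc qc by simp
  thus ?thesis using S pq unfolding orthonormal_def by auto
qed

context real_vec_space
begin

(* The residual of a vector of the column space after projecting onto the images vanishes. *)
lemma col_space_eq_span_eigenbasis_images:
  fixes D :: "real mat"
  assumes D: "D \<in> carrier_mat n k" and S: "orthonormal k S" "card S = k"
    and ev: "\<forall>p\<in>S. \<exists>\<nu>. D\<^sup>T *\<^sub>v (D *\<^sub>v p) = \<nu> \<cdot>\<^sub>v p"
  shows "col_space D = span ((\<lambda>p. D *\<^sub>v p) ` {p\<in>S. D *\<^sub>v p \<noteq> 0\<^sub>v n})"
    (is "_ = span ?W")
proof
  interpret K: real_vec_space k .
  have Sc: "S \<subseteq> carrier_vec k" "finite S"
    using orthonormal_carrier[OF S(1)] K.orthonormal_finite[OF S(1)] by auto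
  have W: "?W \<subseteq> carrier_vec n" "finite ?W" "0\<^sub>v n \<notin> ?W" using D Sc by auto
  have W_orth: "\<forall>u\<in>?W. \<forall>v\<in>?W. u \<noteq> v \<longrightarrow> u \<bullet> v = 0"
    using eigenbasis_images_orthogonal[OF D S(1) ev] by auto
  have cols: "col_space D = {y \<in> carrier_vec n. \<exists>x\<in>carrier_vec k. D *\<^sub>v x = y}"
    using col_space_eq[OF D] D by simp
  show W_cols: "span ?W \<subseteq> col_space D"
    unfolding col_space_def
  proof (rule span_subsetI)
    show "set (cols D) \<subseteq> carrier_vec n" using D cols_dim[of D] by auto
    show "?W \<subseteq> span (set (cols D))" using cols Sc D unfolding col_space_def by auto
  qed
  show "col_space D \<subseteq> span ?W"
  proof
    fix y assume "y \<in> col_space D"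
    then obtain x where x: "x \<in> carrier_vec k" "y = D *\<^sub>v x" and y: "y \<in> carrier_vec n"
      unfolding cols by auto
    let ?l = "lincomb (\<lambda>w. (y \<bullet> w) / (w \<bullet> w)) ?W"
    have l: "?l \<in> span ?W" "?l \<in> carrier_vec n" using W by (auto intro: lincomb_closed)
    have "?l \<in> col_space D" using subsetD[OF W_cols l(1)] .
    then obtain x' where x': "x' \<in> carrier_vec k" "?l = D *\<^sub>v x'" unfolding cols by auto
    define z where "z = y - ?l"
    have zD: "z = D *\<^sub>v (x - x')"
      unfolding z_def x'(2) unfolding x(2) by (rule mult_minus_distrib_mat_vec[OF D x(1) x'(1), symmetric])
    have "z \<bullet> (D *\<^sub>v t) = 0" if t: "t \<in> S" "D *\<^sub>v t \<noteq> 0\<^sub>v n" for t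
      using orthogonal_projection_residual_perp[OF W(2,1,3) W_orth y] t unfolding z_def by auto
    hence "z = 0\<^sub>v n" using image_perp_eigenbasis_eq_0[OF D S _ zD] x x' by auto
    hence "y = ?l" using eq_of_minus_eq_0_vec[OF y l(2)] unfolding z_def by simp
    thus "y \<in> span ?W" using l by simp
  qed
qed

end

lemma rank_eq_card_eigenbasis:
  fixes D :: "real mat"
  assumes D: "D \<in> carrier_mat m n" and S: "orthonormal n S" "card S = n"
    and ev: "\<forall>p\<in>S. \<exists>\<nu>. D\<^sup>T *\<^sub>v (D *\<^sub>v p) = \<nu> \<cdot>\<^sub>v p"
  shows "vec_space.rank m D = card {p\<in>S. D *\<^sub>v p \<noteq> 0\<^sub>v m}"
proof -
  interpret M: real_vec_space m .
  interpret N: real_vec_space n .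
  let ?T = "{p\<in>S. D *\<^sub>v p \<noteq> 0\<^sub>v m}"
  let ?W = "(\<lambda>p. D *\<^sub>v p) ` ?T"
  have Sc: "S \<subseteq> carrier_vec n" "finite S"
    using orthonormal_carrier[OF S(1)] N.orthonormal_finite[OF S(1)] by auto
  have W: "?W \<subseteq> carrier_vec m" "finite ?W" "0\<^sub>v m \<notin> ?W" using D Sc by auto
  note image_orth = eigenbasis_images_orthogonal[OF D S(1) ev]
  have "inj_on (\<lambda>p. D *\<^sub>v p) ?T"
  proof
    fix p q assume p: "p \<in> ?T" and q: "q \<in> ?T" and eq: "D *\<^sub>v p = D *\<^sub>v q"
    show "p = q"
    proof (rule ccontr)
      assume "p \<noteq> q"
      hence "(D *\<^sub>v p) \<bullet> (D *\<^sub>v p) = 0" using image_orth[of p q] p q eq by auto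
      thus False using real_scalar_prod_self_eq_0_iff[of "D *\<^sub>v p" m] p D Sc by auto
    qed
  qed
  hence "card ?W = card ?T" by (rule card_image)
  moreover have "vec_space.rank m D = vectorspace.dim class_ring (M.span_vs ?W)"
    using M.col_space_eq_span_eigenbasis_images[OF D S ev] unfolding M.rank_def M.col_space_def by simp
  moreover have "\<forall>u\<in>?W. \<forall>v\<in>?W. u \<noteq> v \<longrightarrow> u \<bullet> v = 0" using image_orth by auto
  hence "vectorspace.dim class_ring (M.span_vs ?W) = card ?W"
    using M.dim_span_lin_indpt[OF W(2,1) M.orthogonal_lin_indpt[OF W(1,3)]] by blast
  ultimately show ?thesis by simp
qed

lemma real_rank_transpose:
  fixes D :: "real mat" assumes D: "D \<in> carrier_mat m n"
  shows "vec_space.rank n D\<^sup>T = vec_space.rank m D"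
proof -
  interpret N: real_vec_space n .
  obtain S where "orthonormal n S" "card S = n" "\<forall>p\<in>S. \<exists>\<nu>. D\<^sup>T *\<^sub>v (D *\<^sub>v p) = \<nu> \<cdot>\<^sub>v p"
    using N.gram_orthonormal_eigenbasis[OF D] by blast
  thus ?thesis using N.rank_transpose_eq_card_eigenbasis[OF D] rank_eq_card_eigenbasis[OF D] by simp
qed

section \<open>Matrix identities for Gram mates\<close>

lemma carrier_mat_eq_iff_index:
  assumes "X \<in> carrier_mat k l" "Y \<in> carrier_mat k l"
  shows "X = Y \<longleftrightarrow> (\<forall>i<k. \<forall>j<l. X $$ (i,j) = Y $$ (i,j))"
proof
  assume "\<forall>i<k. \<forall>j<l. X $$ (i,j) = Y $$ (i,j)"
  thus "X = Y" using assms by (intro eq_matI) auto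
qed simp

lemma index_mult_transpose_swap:
  fixes A B :: "real mat"
  assumes "A \<in> carrier_mat m n" "B \<in> carrier_mat m n" "i < m" "j < m"
  shows "(A * B\<^sup>T) $$ (j,i) = (B * A\<^sup>T) $$ (i,j)"
  using assms by (simp add: comm_scalar_prod[of _ n])

lemma index_sum_mult_diff_transpose:
  fixes A B :: "real mat"
  assumes "A \<in> carrier_mat m n" "B \<in> carrier_mat m n" "i < m" "j < m"
  shows "((A + B) * (A - B)\<^sup>T) $$ (i,j)
    = (A * A\<^sup>T) $$ (i,j) - (B * B\<^sup>T) $$ (i,j) + (B * A\<^sup>T) $$ (i,j) - (A * B\<^sup>T) $$ (i,j)"
  using assms
  by (simp add: scalar_prod_def sum_subtractf[symmetric] sum.distrib[symmetric] algebra_simps)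

lemma index_diff_transpose_mult_sum:
  fixes A B :: "real mat"
  assumes "A \<in> carrier_mat m n" "B \<in> carrier_mat m n" "i < n" "j < n"
  shows "((A - B)\<^sup>T * (A + B)) $$ (i,j)
    = (A\<^sup>T * A) $$ (i,j) - (B\<^sup>T * B) $$ (i,j) + (A\<^sup>T * B) $$ (i,j) - (B\<^sup>T * A) $$ (i,j)"
  using assms
  by (simp add: scalar_prod_def sum_subtractf[symmetric] sum.distrib[symmetric] algebra_simps)

lemma index_mult_diff_transpose:
  fixes A B :: "real mat"
  assumes "A \<in> carrier_mat m n" "B \<in> carrier_mat m n" "i < m" "j < m"
  shows "(A * (A - B)\<^sup>T) $$ (i,j) = (A * A\<^sup>T) $$ (i,j) - (A * B\<^sup>T) $$ (i,j)"
  using assms by (simp add: scalar_prod_def sum_subtractf[symmetric] algebra_simps)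

lemma sum_mult_diff_transpose_eq_0_iff:
  fixes A B :: "real mat"
  assumes AB: "A \<in> carrier_mat m n" "B \<in> carrier_mat m n" and G: "A * A\<^sup>T = B * B\<^sup>T"
  shows "(A + B) * (A - B)\<^sup>T = 0\<^sub>m m m \<longleftrightarrow> A * B\<^sup>T = B * A\<^sup>T"
proof -
  have "((A + B) * (A - B)\<^sup>T) $$ (i,j) = 0\<^sub>m m m $$ (i,j) \<longleftrightarrow> (A * B\<^sup>T) $$ (i,j) = (B * A\<^sup>T) $$ (i,j)"
    if "i < m" "j < m" for i j
    using index_sum_mult_diff_transpose[OF AB that] G that by auto
  thus ?thesis using AB by (subst (1 2) carrier_mat_eq_iff_index[of _ m m]) auto
qed

lemma transpose_mat_eq_0_iff:
  fixes X :: "'a :: zero mat" assumes "X \<in> carrier_mat k l"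
  shows "X\<^sup>T = 0\<^sub>m l k \<longleftrightarrow> X = 0\<^sub>m k l"
proof
  assume "X\<^sup>T = 0\<^sub>m l k"
  hence "X\<^sup>T\<^sup>T = (0\<^sub>m l k)\<^sup>T" by (rule arg_cong)
  thus "X = 0\<^sub>m k l" by simp
qed simp

lemma diff_transpose_mult_sum_eq_0_iff:
  fixes A B :: "real mat"
  assumes AB: "A \<in> carrier_mat m n" "B \<in> carrier_mat m n" and G: "A\<^sup>T * A = B\<^sup>T * B"
  shows "(A - B)\<^sup>T * (A + B) = 0\<^sub>m n n \<longleftrightarrow> A\<^sup>T * B = B\<^sup>T * A"
proof -
  have ABT: "A\<^sup>T \<in> carrier_mat n m" "B\<^sup>T \<in> carrier_mat n m" using AB by auto
  have "((A\<^sup>T + B\<^sup>T) * (A\<^sup>T - B\<^sup>T)\<^sup>T)\<^sup>T = (A\<^sup>T - B\<^sup>T)\<^sup>T\<^sup>T * (A\<^sup>T + B\<^sup>T)\<^sup>T"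
    using ABT by (intro transpose_mult) auto
  also have "\<dots> = (A - B)\<^sup>T * (A + B)"
    unfolding transpose_add[OF ABT] transpose_minus[OF AB] by simp
  finally have eq: "(A - B)\<^sup>T * (A + B) = ((A\<^sup>T + B\<^sup>T) * (A\<^sup>T - B\<^sup>T)\<^sup>T)\<^sup>T" ..
  have Y: "(A\<^sup>T + B\<^sup>T) * (A\<^sup>T - B\<^sup>T)\<^sup>T \<in> carrier_mat n n" using ABT by (intro mult_carrier_mat) auto
  have "A\<^sup>T * A\<^sup>T\<^sup>T = B\<^sup>T * B\<^sup>T\<^sup>T" using G by simp
  from sum_mult_diff_transpose_eq_0_iff[OF ABT this]
  show ?thesis unfolding eq transpose_mat_eq_0_iff[OF Y] by (simp only: transpose_transpose)
qed

lemma mult_diff_transpose_symmetric_iff: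
  fixes A B :: "real mat"
  assumes AB: "A \<in> carrier_mat m n" "B \<in> carrier_mat m n"
  shows "(A * (A - B)\<^sup>T)\<^sup>T = A * (A - B)\<^sup>T \<longleftrightarrow> A * B\<^sup>T = B * A\<^sup>T"
proof -
  have "(A * (A - B)\<^sup>T)\<^sup>T $$ (i,j) = (A * (A - B)\<^sup>T) $$ (i,j) \<longleftrightarrow> (A * B\<^sup>T) $$ (i,j) = (B * A\<^sup>T) $$ (i,j)"
    if "i < m" "j < m" for i j
  proof -
    have "(A * (A - B)\<^sup>T)\<^sup>T $$ (i,j) = (A * (A - B)\<^sup>T) $$ (j,i)" using AB that by simp
    also have "\<dots> = (A * A\<^sup>T) $$ (i,j) - (B * A\<^sup>T) $$ (i,j)"
      using index_mult_diff_transpose[OF AB that(2,1)] index_mult_transpose_swap[OF AB(1) AB(1) that]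
        index_mult_transpose_swap[OF AB that] by simp
    finally show ?thesis using index_mult_diff_transpose[OF AB that] by auto
  qed
  thus ?thesis using AB by (subst (1 2) carrier_mat_eq_iff_index[of _ m m]) auto
qed

lemma transpose_mult_self_eq_0:
  fixes X :: "real mat"
  assumes X: "X \<in> carrier_mat k l" and XX: "X\<^sup>T * X = 0\<^sub>m l l"
  shows "X = 0\<^sub>m k l"
proof (rule eq_matI)
  fix i j assume ij: "i < dim_row (0\<^sub>m k l)" "j < dim_col (0\<^sub>m k l)"
  have "(X\<^sup>T * X) $$ (j,j) = (\<Sum>r\<in>{0..<k}. X $$ (r,j) * X $$ (r,j))"
    using X ij by (simp add: scalar_prod_def)
  hence "(\<Sum>r\<in>{0..<k}. X $$ (r,j) * X $$ (r,j)) = 0" using XX ij by simp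
  hence "\<forall>r\<in>{0..<k}. X $$ (r,j) * X $$ (r,j) = 0"
    using sum_nonneg_eq_0_iff[of "{0..<k}" "\<lambda>r. X $$ (r,j) * X $$ (r,j)"] by simp
  thus "X $$ (i,j) = 0\<^sub>m k l $$ (i,j)" using ij by simp
qed (use X in auto)

(* For Gram mates, symmetry of A B^T forces symmetry of A^T B: the matrix
   X = (A - B)^T (A + B) is then skew-symmetric and squares to zero. *)
lemma gram_mates_symmetric_transpose_mult:
  fixes A B :: "real mat"
  assumes AB: "A \<in> carrier_mat m n" "B \<in> carrier_mat m n"
    and G1: "A * A\<^sup>T = B * B\<^sup>T" and G2: "A\<^sup>T * A = B\<^sup>T * B" and sym: "A * B\<^sup>T = B * A\<^sup>T"
  shows "A\<^sup>T * B = B\<^sup>T * A"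
proof -
  have C: "A + B \<in> carrier_mat m n" and DT: "(A - B)\<^sup>T \<in> carrier_mat n m" using AB by auto
  define X where "X = (A - B)\<^sup>T * (A + B)"
  have X: "X \<in> carrier_mat n n" unfolding X_def using AB by auto
  have CDT: "(A + B) * (A - B)\<^sup>T = 0\<^sub>m m m" using sum_mult_diff_transpose_eq_0_iff[OF AB G1] sym by simp
  have "X * X = (A - B)\<^sup>T * ((A + B) * ((A - B)\<^sup>T * (A + B)))"
    unfolding X_def using X_def X by (intro assoc_mult_mat[OF DT C]) simp
  also have "(A + B) * ((A - B)\<^sup>T * (A + B)) = ((A + B) * (A - B)\<^sup>T) * (A + B)"
    by (rule assoc_mult_mat[OF C DT C, symmetric])
  finally have "X * X = (A - B)\<^sup>T * (((A + B) * (A - B)\<^sup>T) * (A + B))" .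
  hence XX: "X * X = 0\<^sub>m n n"
    unfolding CDT left_mult_zero_mat[OF C] right_mult_zero_mat[OF DT] .
  have ABT: "A\<^sup>T \<in> carrier_mat n m" "B\<^sup>T \<in> carrier_mat n m" using AB by auto
  have X_entry: "X $$ (i,j) = (A\<^sup>T * B) $$ (i,j) - (A\<^sup>T * B) $$ (j,i)" if "i < n" "j < n" for i j
    using index_diff_transpose_mult_sum[OF AB that] index_mult_transpose_swap[OF ABT that] G2
    unfolding X_def by simp
  have skew: "X $$ (r,i) = - X $$ (i,r)" if "i < n" "r < n" for i r
    using X_entry[OF that] X_entry[OF that(2,1)] by simp
  have "X\<^sup>T * X = 0\<^sub>m n n"
  proof (rule eq_matI)
    fix i j assume ij: "i < dim_row (0\<^sub>m n n)" "j < dim_col (0\<^sub>m n n)"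
    have "(X\<^sup>T * X) $$ (i,j) = (\<Sum>r\<in>{0..<n}. X $$ (r,i) * X $$ (r,j))"
      using X ij by (simp add: scalar_prod_def)
    also have "\<dots> = (\<Sum>r\<in>{0..<n}. - (X $$ (i,r) * X $$ (r,j)))"
    proof (intro sum.cong refl)
      fix r assume "r \<in> {0..<n}"
      thus "X $$ (r,i) * X $$ (r,j) = - (X $$ (i,r) * X $$ (r,j))" using skew[of i r] ij by simp
    qed
    also have "\<dots> = - (\<Sum>r\<in>{0..<n}. X $$ (i,r) * X $$ (r,j))" by (rule sum_negf)
    also have "(\<Sum>r\<in>{0..<n}. X $$ (i,r) * X $$ (r,j)) = (X * X) $$ (i,j)"
      using X ij by (simp add: scalar_prod_def)
    finally show "(X\<^sup>T * X) $$ (i,j) = 0\<^sub>m n n $$ (i,j)" using XX ij by simp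
  qed (use X in auto)
  hence "X = 0\<^sub>m n n" using transpose_mult_self_eq_0[OF X] by simp
  thus ?thesis using diff_transpose_mult_sum_eq_0_iff[OF AB G2] unfolding X_def by simp
qed

lemma gram_mates_transpose: "gram_mates A\<^sup>T B\<^sup>T \<longleftrightarrow> gram_mates A B"
  unfolding gram_mates_def zero_one_mat_def by auto

section \<open>An orthonormal eigenbasis adapted to Gram mates\<close>

lemma zero_mat_mult_vec [simp]:
  fixes y :: "'a :: comm_ring_1 vec"
  shows "y \<in> carrier_vec k \<Longrightarrow> 0\<^sub>m j k *\<^sub>v y = 0\<^sub>v j"
  by (intro eq_vecI) (auto simp: scalar_prod_def)

lemma transpose_mult_vec_orthogonal:
  fixes C D :: "real mat"
  assumes C: "C \<in> carrier_mat m n" and D: "D \<in> carrier_mat m n" and CD: "C * D\<^sup>T = 0\<^sub>m m m"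
    and x: "x \<in> carrier_vec m" and y: "y \<in> carrier_vec m"
  shows "(C\<^sup>T *\<^sub>v x) \<bullet> (D\<^sup>T *\<^sub>v y) = 0"
proof -
  have "(C\<^sup>T *\<^sub>v x) \<bullet> (D\<^sup>T *\<^sub>v y) = x \<bullet> (C *\<^sub>v (D\<^sup>T *\<^sub>v y))"
    using transpose_vec_mult_scalar[OF C _ x, of "D\<^sup>T *\<^sub>v y"] D y by simp
  also have "C *\<^sub>v (D\<^sup>T *\<^sub>v y) = (C * D\<^sup>T) *\<^sub>v y" using C D y by simp
  finally show ?thesis using CD x y by simp
qed

(* Splitting C^T C - D^T D along Row C, which is orthogonal to Row D: the eigenvalue l
   of such an eigenvector has |C^T C p|^2 = l |C p|^2 and |D^T D p|^2 = - l |D p|^2. *)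
lemma eigenvector_in_kernel_of_either:
  fixes C D :: "real mat"
  assumes C: "C \<in> carrier_mat m n" and D: "D \<in> carrier_mat m n" and CD: "C * D\<^sup>T = 0\<^sub>m m m"
    and p: "p \<in> carrier_vec n" and ev: "C\<^sup>T *\<^sub>v (C *\<^sub>v p) - D\<^sup>T *\<^sub>v (D *\<^sub>v p) = l \<cdot>\<^sub>v p"
  shows "C *\<^sub>v p = 0\<^sub>v m \<or> D *\<^sub>v p = 0\<^sub>v m"
proof -
  define c where "c = C *\<^sub>v p"
  define d where "d = D *\<^sub>v p"
  have c: "c \<in> carrier_vec m" and d: "d \<in> carrier_vec m" unfolding c_def d_def using C D p by auto
  have Cc: "C\<^sup>T *\<^sub>v c \<in> carrier_vec n" and Dd: "D\<^sup>T *\<^sub>v d \<in> carrier_vec n" using C D c d by auto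
  have orth: "(C\<^sup>T *\<^sub>v c) \<bullet> (D\<^sup>T *\<^sub>v d) = 0" "(D\<^sup>T *\<^sub>v d) \<bullet> (C\<^sup>T *\<^sub>v c) = 0"
    using transpose_mult_vec_orthogonal[OF C D CD c d] comm_scalar_prod[OF Cc Dd] by auto
  have cc: "(C\<^sup>T *\<^sub>v c) \<bullet> p = c \<bullet> c" and dd: "(D\<^sup>T *\<^sub>v d) \<bullet> p = d \<bullet> d"
    unfolding c_def d_def using transpose_vec_mult_scalar[OF C p] transpose_vec_mult_scalar[OF D p] c d
    unfolding c_def d_def by auto
  have "(C\<^sup>T *\<^sub>v c) \<bullet> (C\<^sup>T *\<^sub>v c) = (C\<^sup>T *\<^sub>v c) \<bullet> (C\<^sup>T *\<^sub>v c - D\<^sup>T *\<^sub>v d)"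
    using scalar_prod_minus_distrib[OF Cc Cc Dd] orth by simp
  also have "\<dots> = l * (c \<bullet> c)" using ev cc Cc p unfolding c_def d_def by simp
  finally have Cl: "(C\<^sup>T *\<^sub>v c) \<bullet> (C\<^sup>T *\<^sub>v c) = l * (c \<bullet> c)" .
  have "(D\<^sup>T *\<^sub>v d) \<bullet> (D\<^sup>T *\<^sub>v d) = - ((D\<^sup>T *\<^sub>v d) \<bullet> (C\<^sup>T *\<^sub>v c - D\<^sup>T *\<^sub>v d))"
    using scalar_prod_minus_distrib[OF Dd Cc Dd] orth by simp
  also have "\<dots> = - l * (d \<bullet> d)" using ev dd Dd p unfolding c_def d_def by simp
  finally have Dl: "(D\<^sup>T *\<^sub>v d) \<bullet> (D\<^sup>T *\<^sub>v d) = - l * (d \<bullet> d)" .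
  have nonneg: "0 \<le> (C\<^sup>T *\<^sub>v c) \<bullet> (C\<^sup>T *\<^sub>v c)" "0 \<le> (D\<^sup>T *\<^sub>v d) \<bullet> (D\<^sup>T *\<^sub>v d)"
    "0 \<le> c \<bullet> c" "0 \<le> d \<bullet> d" by (simp_all add: real_scalar_prod_self_ge_0)
  consider "l > 0" | "l < 0" | "l = 0" by linarith
  hence "c \<bullet> c = 0 \<or> d \<bullet> d = 0"
  proof cases
    case 1
    thus ?thesis using Dl nonneg by (simp add: mult_le_0_iff)
  next
    case 2
    thus ?thesis using Cl nonneg by (simp add: mult_le_0_iff zero_le_mult_iff)
  next
    case 3
    hence "C\<^sup>T *\<^sub>v c = 0\<^sub>v n" using Cl real_scalar_prod_self_eq_0_iff[OF Cc] by simp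
    thus ?thesis using cc p by simp
  qed
  thus ?thesis using real_scalar_prod_self_eq_0_iff[OF c] real_scalar_prod_self_eq_0_iff[OF d]
    unfolding c_def d_def by auto
qed

lemma gram_sum_plus_gram_diff:
  fixes A B :: "real mat"
  assumes AB: "A \<in> carrier_mat m n" "B \<in> carrier_mat m n" and G: "A\<^sup>T * A = B\<^sup>T * B"
  shows "(A + B)\<^sup>T * (A + B) + (A - B)\<^sup>T * (A - B) = 4 \<cdot>\<^sub>m (A\<^sup>T * A)"
proof (rule eq_matI)
  fix i j assume "i < dim_row (4 \<cdot>\<^sub>m (A\<^sup>T * A))" "j < dim_col (4 \<cdot>\<^sub>m (A\<^sup>T * A))"
  hence ij: "i < n" "j < n" using AB by auto
  have "((A + B)\<^sup>T * (A + B) + (A - B)\<^sup>T * (A - B)) $$ (i,j)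
      = (\<Sum>k\<in>{0..<m}. (A + B) $$ (k,i) * (A + B) $$ (k,j) + (A - B) $$ (k,i) * (A - B) $$ (k,j))"
    using AB ij by (simp add: scalar_prod_def sum.distrib)
  also have "\<dots> = (\<Sum>k\<in>{0..<m}. 2 * (A $$ (k,i) * A $$ (k,j)) + 2 * (B $$ (k,i) * B $$ (k,j)))"
    using AB ij by (intro sum.cong) (auto simp: algebra_simps)
  also have "\<dots> = 2 * (A\<^sup>T * A) $$ (i,j) + 2 * (B\<^sup>T * B) $$ (i,j)"
    using AB ij by (simp add: scalar_prod_def sum.distrib sum_distrib_left)
  finally show "((A + B)\<^sup>T * (A + B) + (A - B)\<^sup>T * (A - B)) $$ (i,j) = (4 \<cdot>\<^sub>m (A\<^sup>T * A)) $$ (i,j)"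
    using G AB ij by simp
qed (use AB in auto)


lemma smult_mat_mult_vec:
  fixes M :: "'a :: comm_ring_1 mat"
  shows "M \<in> carrier_mat k l \<Longrightarrow> p \<in> carrier_vec l \<Longrightarrow> (a \<cdot>\<^sub>m M) *\<^sub>v p = a \<cdot>\<^sub>v (M *\<^sub>v p)"
  by (intro eq_vecI) auto

lemma mult_vec_of_sum_kernel:
  fixes A B :: "real mat"
  assumes AB: "A \<in> carrier_mat m n" "B \<in> carrier_mat m n" and q: "q \<in> carrier_vec n"
    and h: "(A + B) *\<^sub>v q = 0\<^sub>v m"
  shows "B *\<^sub>v q = - (A *\<^sub>v q)" "(A - B) *\<^sub>v q = 2 \<cdot>\<^sub>v (A *\<^sub>v q)"
proof -
  have "(A *\<^sub>v q) $ i + (B *\<^sub>v q) $ i = 0" if "i < m" for i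
    using arg_cong[OF h, of "\<lambda>v. v $ i"] add_mult_distrib_mat_vec[OF AB q] that AB q by simp
  hence Bq: "(B *\<^sub>v q) $ i = - (A *\<^sub>v q) $ i" if "i < m" for i using that by fastforce
  show "B *\<^sub>v q = - (A *\<^sub>v q)" by (rule eq_vecI) (use Bq AB q in auto)
  show "(A - B) *\<^sub>v q = 2 \<cdot>\<^sub>v (A *\<^sub>v q)"
    unfolding minus_mult_distrib_mat_vec[OF AB q] by (rule eq_vecI) (use Bq AB q in auto)
qed

lemma mult_vec_of_diff_kernel:
  fixes A B :: "real mat"
  assumes AB: "A \<in> carrier_mat m n" "B \<in> carrier_mat m n" and q: "q \<in> carrier_vec n"
    and h: "(A - B) *\<^sub>v q = 0\<^sub>v m"
  shows "B *\<^sub>v q = A *\<^sub>v q"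
  using h minus_mult_distrib_mat_vec[OF AB q] eq_of_minus_eq_0_vec[of "A *\<^sub>v q" m "B *\<^sub>v q"] AB q
  by auto

lemma gram_mates_eigenvector_cases:
  fixes A B :: "real mat"
  assumes AB: "A \<in> carrier_mat m n" "B \<in> carrier_mat m n"
    and G: "A\<^sup>T * A = B\<^sup>T * B" and CDT: "(A + B) * (A - B)\<^sup>T = 0\<^sub>m m m"
    and p: "p \<in> carrier_vec n"
    and ev: "(A + B)\<^sup>T *\<^sub>v ((A + B) *\<^sub>v p) - (A - B)\<^sup>T *\<^sub>v ((A - B) *\<^sub>v p) = l \<cdot>\<^sub>v p"
  shows "(\<exists>\<mu>. A\<^sup>T *\<^sub>v (A *\<^sub>v p) = \<mu> \<cdot>\<^sub>v p) \<and> (\<exists>\<nu>. (A - B)\<^sup>T *\<^sub>v ((A - B) *\<^sub>v p) = \<nu> \<cdot>\<^sub>v p)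
    \<and> ((A + B) *\<^sub>v p = 0\<^sub>v m \<or> (A - B) *\<^sub>v p = 0\<^sub>v m)"
proof -
  define C where "C = A + B"
  define D where "D = A - B"
  have C: "C \<in> carrier_mat m n" and D: "D \<in> carrier_mat m n" unfolding C_def D_def using AB by auto
  let ?c = "C\<^sup>T *\<^sub>v (C *\<^sub>v p)" and ?d = "D\<^sup>T *\<^sub>v (D *\<^sub>v p)" and ?a = "A\<^sup>T *\<^sub>v (A *\<^sub>v p)"
  have cd: "?c \<in> carrier_vec n" "?d \<in> carrier_vec n" "?a \<in> carrier_vec n" using C D AB p by auto
  have "4 \<cdot>\<^sub>v ?a = (4 \<cdot>\<^sub>m (A\<^sup>T * A)) *\<^sub>v p" using smult_mat_mult_vec[of "A\<^sup>T * A" n n p 4] AB p by simp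
  also have "\<dots> = ?c + ?d"
  proof -
    have CC: "C\<^sup>T * C \<in> carrier_mat n n" "D\<^sup>T * D \<in> carrier_mat n n" using C D by auto
    show ?thesis unfolding gram_sum_plus_gram_diff[OF AB G, symmetric] C_def[symmetric] D_def[symmetric]
      using add_mult_distrib_mat_vec[OF CC p] C D p by simp
  qed
  finally have four: "4 \<cdot>\<^sub>v ?a = ?c + ?d" .
  have kernel: "C *\<^sub>v p = 0\<^sub>v m \<or> D *\<^sub>v p = 0\<^sub>v m"
    using eigenvector_in_kernel_of_either[OF C D _ p] CDT ev unfolding C_def D_def by blast
  have ev_i: "?c $ i - ?d $ i = l * p $ i" if "i < n" for i
    using arg_cong[OF ev, of "\<lambda>v. v $ i"] cd p AB that unfolding C_def D_def
    by (simp add: carrier_vecD)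
  have four_i: "4 * ?a $ i = ?c $ i + ?d $ i" if "i < n" for i
    using arg_cong[OF four, of "\<lambda>v. v $ i"] cd p C D AB that by (simp add: carrier_vecD)
  have "(\<exists>\<mu>. ?a = \<mu> \<cdot>\<^sub>v p) \<and> (\<exists>\<nu>. ?d = \<nu> \<cdot>\<^sub>v p)"
  proof (cases "C *\<^sub>v p = 0\<^sub>v m")
    case True
    hence "?c $ i = 0" if "i < n" for i using C that by simp
    hence "?a $ i = (- l / 4) * p $ i \<and> ?d $ i = (- l) * p $ i" if "i < n" for i
      using ev_i[OF that] four_i[OF that] that by auto
    hence "?a = (- l / 4) \<cdot>\<^sub>v p \<and> ?d = (- l) \<cdot>\<^sub>v p" using cd p AB D by (intro conjI eq_vecI) auto
    thus ?thesis by blast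
  next
    case False
    hence "?d $ i = 0" if "i < n" for i using kernel D that by simp
    hence "?a $ i = (l / 4) * p $ i \<and> ?d $ i = 0 * p $ i" if "i < n" for i
      using ev_i[OF that] four_i[OF that] that by auto
    hence "?a = (l / 4) \<cdot>\<^sub>v p \<and> ?d = 0 \<cdot>\<^sub>v p" using cd p AB D by (intro conjI eq_vecI) auto
    thus ?thesis by blast
  qed
  thus ?thesis using kernel unfolding C_def D_def by blast
qed

lemma gram_mates_eigenbasis:
  fixes A B :: "real mat"
  assumes AB: "A \<in> carrier_mat m n" "B \<in> carrier_mat m n"
    and G: "A\<^sup>T * A = B\<^sup>T * B" and CDT: "(A + B) * (A - B)\<^sup>T = 0\<^sub>m m m"
  shows "\<exists>S. orthonormal n S \<and> card S = n \<and> (\<forall>p\<in>S.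
      (\<exists>\<mu>. A\<^sup>T *\<^sub>v (A *\<^sub>v p) = \<mu> \<cdot>\<^sub>v p) \<and> (\<exists>\<nu>. (A - B)\<^sup>T *\<^sub>v ((A - B) *\<^sub>v p) = \<nu> \<cdot>\<^sub>v p)
      \<and> ((A + B) *\<^sub>v p = 0\<^sub>v m \<or> (A - B) *\<^sub>v p = 0\<^sub>v m))"
proof -
  interpret N: real_vec_space n .
  define C where "C = A + B"
  define D where "D = A - B"
  have C: "C \<in> carrier_mat m n" and D: "D \<in> carrier_mat m n" unfolding C_def D_def using AB by auto
  have CC: "C\<^sup>T * C \<in> carrier_mat n n" and DD: "D\<^sup>T * D \<in> carrier_mat n n" using C D by auto
  define M where "M = C\<^sup>T * C - D\<^sup>T * D"
  have M: "M \<in> carrier_mat n n" unfolding M_def using C D by auto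
  have "M\<^sup>T = M" unfolding M_def transpose_minus[OF CC DD]
    using transpose_mult[of "C\<^sup>T" n m C n] transpose_mult[of "D\<^sup>T" n m D n] C D by simp
  then obtain S where S: "orthonormal n S" "card S = n" "\<forall>s\<in>S. \<exists>l. M *\<^sub>v s = l \<cdot>\<^sub>v s"
    using N.symmetric_orthonormal_eigenbasis[OF M] by blast
  have "M *\<^sub>v p = C\<^sup>T *\<^sub>v (C *\<^sub>v p) - D\<^sup>T *\<^sub>v (D *\<^sub>v p)" if "p \<in> carrier_vec n" for p
    unfolding M_def using minus_mult_distrib_mat_vec[OF CC DD that] C D that by simp
  hence "\<forall>p\<in>S. \<exists>l. C\<^sup>T *\<^sub>v (C *\<^sub>v p) - D\<^sup>T *\<^sub>v (D *\<^sub>v p) = l \<cdot>\<^sub>v p"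
    using S(3) orthonormal_carrier[OF S(1)] by (metis subsetD)
  thus ?thesis using gram_mates_eigenvector_cases[OF AB G CDT] S(1,2) orthonormal_carrier[OF S(1)]
    unfolding C_def D_def by blast
qed

section \<open>Right singular vectors spanning the row space of the difference\<close>

lemma singular_triple_of_eigenvector:
  fixes A :: "real mat"
  assumes A: "A \<in> carrier_mat m n" and p: "p \<in> carrier_vec n" "p \<bullet> p = 1"
    and ev: "A\<^sup>T *\<^sub>v (A *\<^sub>v p) = \<mu> \<cdot>\<^sub>v p" and nz: "A *\<^sub>v p \<noteq> 0\<^sub>v m"
  defines "\<sigma> \<equiv> sqrt ((A *\<^sub>v p) \<bullet> (A *\<^sub>v p))"
  shows "singular_triple m n A \<sigma> ((1 / \<sigma>) \<cdot>\<^sub>v (A *\<^sub>v p)) p" "\<sigma> > 0"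
proof -
  define a where "a = A *\<^sub>v p"
  have a: "a \<in> carrier_vec m" unfolding a_def using A p by auto
  have pos: "a \<bullet> a > 0" using real_scalar_prod_self_gt_0_iff[OF a] nz unfolding a_def by simp
  show \<sigma>: "\<sigma> > 0" unfolding \<sigma>_def a_def[symmetric] using pos by simp
  have \<sigma>\<sigma>: "\<sigma> * \<sigma> = a \<bullet> a" unfolding \<sigma>_def a_def[symmetric] using pos by simp
  have "(A\<^sup>T *\<^sub>v a) \<bullet> p = a \<bullet> a" unfolding a_def by (rule transpose_vec_mult_scalar[OF A p(1) a[unfolded a_def]])
  hence \<mu>: "\<mu> = \<sigma> * \<sigma>" using ev p \<sigma>\<sigma> unfolding a_def by simp
  define u where "u = (1 / \<sigma>) \<cdot>\<^sub>v (A *\<^sub>v p)"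
  have u: "u \<in> carrier_vec m" unfolding u_def using A p by auto
  have uu: "u \<bullet> u = 1" unfolding u_def \<sigma>_def using scalar_prod_normalize_self[OF a[unfolded a_def] nz] .
  have Av: "A *\<^sub>v p = \<sigma> \<cdot>\<^sub>v u" unfolding u_def using \<sigma> by (simp add: smult_smult_assoc)
  have "A\<^sup>T *\<^sub>v u = (1 / \<sigma>) \<cdot>\<^sub>v (\<mu> \<cdot>\<^sub>v p)"
    unfolding u_def using mult_mat_vec[of "A\<^sup>T" n m a "1 / \<sigma>"] A a ev unfolding a_def by simp
  also have "\<dots> = \<sigma> \<cdot>\<^sub>v p" using \<sigma> unfolding \<mu> by (simp add: smult_smult_assoc)
  finally have ATu: "A\<^sup>T *\<^sub>v u = \<sigma> \<cdot>\<^sub>v p" .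
  show "singular_triple m n A \<sigma> ((1 / \<sigma>) \<cdot>\<^sub>v (A *\<^sub>v p)) p"
    unfolding singular_triple_def u_def[symmetric] using \<sigma> u uu Av ATu p by simp
qed

lemma singular_triple_gram_eigenvector:
  fixes A :: "real mat"
  assumes A: "A \<in> carrier_mat m n" and st: "singular_triple m n A \<sigma> u v"
  shows "A\<^sup>T *\<^sub>v (A *\<^sub>v v) = (\<sigma> * \<sigma>) \<cdot>\<^sub>v v"
proof -
  from st have u: "u \<in> carrier_vec m" and Av: "A *\<^sub>v v = \<sigma> \<cdot>\<^sub>v u" and ATu: "A\<^sup>T *\<^sub>v u = \<sigma> \<cdot>\<^sub>v v"
    unfolding singular_triple_def by auto
  have "A\<^sup>T *\<^sub>v (\<sigma> \<cdot>\<^sub>v u) = \<sigma> \<cdot>\<^sub>v (A\<^sup>T *\<^sub>v u)" by (rule mult_mat_vec) (use A u in auto)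
  thus ?thesis unfolding Av ATu by (simp add: smult_smult_assoc)
qed

lemma right_singular_basis_of_gram_mates:
  fixes A B :: "real mat"
  assumes AB: "A \<in> carrier_mat m n" "B \<in> carrier_mat m n"
    and G: "A\<^sup>T * A = B\<^sup>T * B" and CDT: "(A + B) * (A - B)\<^sup>T = 0\<^sub>m m m"
  shows "\<exists>vs. length vs = vec_space.rank m (A - B) \<and>
     (\<forall>v\<in>set vs. \<exists>\<sigma>>0. right_singular_vector m n A \<sigma> v) \<and>
     vec_space.is_basis_list n vs (vec_space.row_space n (A - B)) \<and>
     (\<forall>v\<in>set vs. (A + B) *\<^sub>v v = 0\<^sub>v m)"
proof -
  interpret N: real_vec_space n .
  obtain S where S: "orthonormal n S" "card S = n" and SP: "\<forall>p\<in>S.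
      (\<exists>\<mu>. A\<^sup>T *\<^sub>v (A *\<^sub>v p) = \<mu> \<cdot>\<^sub>v p) \<and> (\<exists>\<nu>. (A - B)\<^sup>T *\<^sub>v ((A - B) *\<^sub>v p) = \<nu> \<cdot>\<^sub>v p) \<and>
      ((A + B) *\<^sub>v p = 0\<^sub>v m \<or> (A - B) *\<^sub>v p = 0\<^sub>v m)"
    using gram_mates_eigenbasis[OF AB G CDT] by blast
  have D: "A - B \<in> carrier_mat m n" using AB by auto
  have Sc: "S \<subseteq> carrier_vec n" "finite S" using orthonormal_carrier[OF S(1)] N.orthonormal_finite[OF S(1)] by auto
  let ?T = "{p\<in>S. (A - B) *\<^sub>v p \<noteq> 0\<^sub>v m}"
  have ev: "\<forall>p\<in>S. \<exists>\<nu>. (A - B)\<^sup>T *\<^sub>v ((A - B) *\<^sub>v p) = \<nu> \<cdot>\<^sub>v p" using SP by blast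
  obtain vs where vs: "set vs = ?T" "distinct vs" using finite_distinct_list[of ?T] Sc by auto
  have TO: "orthonormal n ?T" using orthonormal_subset[OF S(1)] by auto
  have "\<exists>\<sigma>>0. right_singular_vector m n A \<sigma> v \<and> (A + B) *\<^sub>v v = 0\<^sub>v m" if v: "v \<in> set vs" for v
  proof -
    have vS: "v \<in> S" and Dv: "(A - B) *\<^sub>v v \<noteq> 0\<^sub>v m" using v vs by auto
    have vc: "v \<in> carrier_vec n" and vv: "v \<bullet> v = 1" using S(1) vS unfolding orthonormal_def by auto
    from SP vS Dv obtain \<mu> where Cv: "(A + B) *\<^sub>v v = 0\<^sub>v m" and mu: "A\<^sup>T *\<^sub>v (A *\<^sub>v v) = \<mu> \<cdot>\<^sub>v v" by auto
    have "A *\<^sub>v v \<noteq> 0\<^sub>v m" using mult_vec_of_sum_kernel(2)[OF AB vc Cv] Dv by auto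
    from singular_triple_of_eigenvector[OF AB(1) vc vv mu this] Cv show ?thesis
      unfolding right_singular_vector_def by blast
  qed
  moreover have "N.is_basis_list vs (N.row_space (A - B))"
    unfolding N.is_basis_list_def using vs Sc N.orthonormal_lin_indpt[OF TO]
      N.row_space_eq_span_eigenbasis[OF D S ev] by auto
  moreover have "length vs = vec_space.rank m (A - B)"
    using distinct_card[OF vs(2)] vs(1) rank_eq_card_eigenbasis[OF D S ev] by simp
  ultimately show ?thesis by blast
qed

context real_vec_space
begin

lemma mult_vec_span_eq_0:
  fixes C :: "real mat"
  assumes C: "C \<in> carrier_mat m n" and X: "X \<subseteq> carrier_vec n" and ker: "\<forall>v\<in>X. C *\<^sub>v v = 0\<^sub>v m"
    and w: "w \<in> span X"
  shows "C *\<^sub>v w = 0\<^sub>v m"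
proof (rule eq_vecI)
  fix i assume "i < dim_vec (0\<^sub>v m)"
  hence i: "i < m" by simp
  have "row C i \<in> orthogonal_complement X"
    unfolding orthogonal_complement_def using C i ker by (auto dest!: arg_cong[of _ _ "\<lambda>v. v $ i"])
  hence "row C i \<in> orthogonal_complement (span X)" using X by simp
  thus "(C *\<^sub>v w) $ i = 0\<^sub>v m $ i" using w C i unfolding orthogonal_complement_def by auto
qed (use C in auto)

lemma mat_eq_of_orthonormal_basis:
  fixes M M' :: "real mat"
  assumes M: "M \<in> carrier_mat k n" "M' \<in> carrier_mat k n" and S: "orthonormal n S" "card S = n"
    and eq: "\<forall>q\<in>S. M *\<^sub>v q = M' *\<^sub>v q"
  shows "M = M'"
proof (rule eq_matI)
  fix i j assume ij: "i < dim_row M'" "j < dim_col M'"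
  have r: "row M i - row M' i \<in> carrier_vec n" using M ij by auto
  have "(row M i - row M' i) \<bullet> q = 0" if "q \<in> S" for q
    using arg_cong[OF bspec[OF eq that], of "\<lambda>v. v $ i"] orthonormal_carrier[OF S(1)] that M ij
      minus_scalar_prod_distrib[of "row M i" n "row M' i" q] by auto
  hence "row M i - row M' i = 0\<^sub>v n" using orthonormal_basis_perp_eq_0[OF S r] by blast
  hence "(row M i - row M' i) $ j = 0" using M ij by simp
  thus "M $$ (i,j) = M' $$ (i,j)" using M ij by simp
qed (use M in auto)

lemma gram_eq_of_orthonormal_basis:
  fixes A B :: "real mat"
  assumes AB: "A \<in> carrier_mat m n" "B \<in> carrier_mat m n" and S: "orthonormal n S" "card S = n"
    and eq: "\<forall>q\<in>S. \<forall>k\<in>S. (B *\<^sub>v q) \<bullet> (B *\<^sub>v k) = (A *\<^sub>v q) \<bullet> (A *\<^sub>v k)"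
  shows "A\<^sup>T * A = B\<^sup>T * B"
proof (rule mat_eq_of_orthonormal_basis[OF _ _ S])
  show "A\<^sup>T * A \<in> carrier_mat n n" "B\<^sup>T * B \<in> carrier_mat n n" using AB by auto
  show "\<forall>q\<in>S. (A\<^sup>T * A) *\<^sub>v q = (B\<^sup>T * B) *\<^sub>v q"
  proof
    fix q assume q: "q \<in> S"
    have Sc: "S \<subseteq> carrier_vec n" using orthonormal_carrier[OF S(1)] .
    have qc: "q \<in> carrier_vec n" using q Sc by auto
    let ?w = "A\<^sup>T *\<^sub>v (A *\<^sub>v q) - B\<^sup>T *\<^sub>v (B *\<^sub>v q)"
    have w: "?w \<in> carrier_vec n" using AB qc by auto
    have "?w \<bullet> k = 0" if k: "k \<in> S" for k
    proof -
      have kc: "k \<in> carrier_vec n" using k Sc by auto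
      have "?w \<bullet> k = (A *\<^sub>v q) \<bullet> (A *\<^sub>v k) - (B *\<^sub>v q) \<bullet> (B *\<^sub>v k)"
        using minus_scalar_prod_distrib[of "A\<^sup>T *\<^sub>v (A *\<^sub>v q)" n "B\<^sup>T *\<^sub>v (B *\<^sub>v q)" k]
          transpose_vec_mult_scalar[OF AB(1) kc, of "A *\<^sub>v q"] transpose_vec_mult_scalar[OF AB(2) kc, of "B *\<^sub>v q"]
          AB qc kc by auto
      thus ?thesis using eq q k by simp
    qed
    hence w0: "?w = 0\<^sub>v n" using orthonormal_basis_perp_eq_0[OF S w] by blast
    show "(A\<^sup>T * A) *\<^sub>v q = (B\<^sup>T * B) *\<^sub>v q"
      using eq_of_minus_eq_0_vec[OF _ _ w0] AB qc by auto
  qed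
qed

end

lemma gram_of_sum_mult_diff_transpose_eq_0:
  fixes A B :: "real mat"
  assumes AB: "A \<in> carrier_mat m n" "B \<in> carrier_mat m n" and h: "(A + B) * (A - B)\<^sup>T = 0\<^sub>m m m"
  shows "A * A\<^sup>T = B * B\<^sup>T"
proof (rule eq_matI)
  fix i j assume "i < dim_row (B * B\<^sup>T)" "j < dim_col (B * B\<^sup>T)"
  hence ij: "i < m" "j < m" using AB by auto
  have "((A + B) * (A - B)\<^sup>T) $$ (i,j) = 0" "((A + B) * (A - B)\<^sup>T) $$ (j,i) = 0" using h ij by auto
  thus "(A * A\<^sup>T) $$ (i,j) = (B * B\<^sup>T) $$ (i,j)"
    unfolding index_sum_mult_diff_transpose[OF AB ij] index_sum_mult_diff_transpose[OF AB ij(2,1)]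
    using index_mult_transpose_swap[OF AB(1) AB(1) ij] index_mult_transpose_swap[OF AB(2) AB(2) ij]
      index_mult_transpose_swap[OF AB ij] index_mult_transpose_swap[OF AB(2,1) ij] by linarith
qed (use AB in auto)

context real_vec_space
begin

lemma kernel_perp_row_space:
  fixes D :: "real mat"
  assumes D: "D \<in> carrier_mat m n" and k: "k \<in> carrier_vec n" "D *\<^sub>v k = 0\<^sub>v m"
    and w: "w \<in> row_space D"
  shows "k \<bullet> w = 0"
proof -
  obtain y where y: "y \<in> carrier_vec m" "w = D\<^sup>T *\<^sub>v y"
    using w unfolding row_space_eq[OF D] using D by auto
  have "w \<bullet> k = y \<bullet> (D *\<^sub>v k)" unfolding y(2) using transpose_vec_mult_scalar[OF D k(1) y(1)] .
  thus ?thesis using comm_scalar_prod[OF k(1), of w] k y D by auto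
qed

lemma mult_transpose_eq_0_of_row_space_kernel:
  fixes C D :: "real mat"
  assumes C: "C \<in> carrier_mat l n" and D: "D \<in> carrier_mat m n"
    and ker: "\<forall>w\<in>row_space D. C *\<^sub>v w = 0\<^sub>v l"
  shows "C * D\<^sup>T = 0\<^sub>m l m"
proof (rule eq_matI)
  fix i j assume "i < dim_row (0\<^sub>m l m)" "j < dim_col (0\<^sub>m l m)"
  hence ij: "i < l" "j < m" by auto
  have "row D j \<in> row_space D"
    using in_own_span[of "set (rows D)"] rows_carrier[of D] D ij
    unfolding row_space_def by (auto simp: rows_def)
  hence "(C *\<^sub>v row D j) $ i = 0" using ker ij by simp
  thus "(C * D\<^sup>T) $$ (i,j) = 0\<^sub>m l m $$ (i,j)" using C D ij by simp
qed (use C D in auto)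

(* A^T A maps each right singular vector v to a multiple of v, hence maps the kernel of D
   into the orthogonal complement of the row space of D spanned by those v. *)
lemma right_singular_basis_kernel_orthogonal:
  fixes A D :: "real mat"
  assumes A: "A \<in> carrier_mat m n" and D: "D \<in> carrier_mat m n"
    and ws: "set ws \<subseteq> carrier_vec n" "span (set ws) = row_space D"
    and sv: "\<forall>v\<in>set ws. \<exists>\<sigma>>0. right_singular_vector m n A \<sigma> v"
    and k: "k \<in> carrier_vec n" "D *\<^sub>v k = 0\<^sub>v m" and q: "q \<in> row_space D"
  shows "(A *\<^sub>v q) \<bullet> (A *\<^sub>v k) = 0"
proof -
  have Ak: "A\<^sup>T *\<^sub>v (A *\<^sub>v k) \<in> orthogonal_complement (set ws)"
    unfolding orthogonal_complement_def
  proof (intro CollectI conjI ballI)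
    show "A\<^sup>T *\<^sub>v (A *\<^sub>v k) \<in> carrier_vec n" using A k by auto
    fix v assume v: "v \<in> set ws"
    then obtain \<sigma> u where st: "singular_triple m n A \<sigma> u v"
      using sv unfolding right_singular_vector_def by blast
    have vc: "v \<in> carrier_vec n" using v ws by auto
    have "(A\<^sup>T *\<^sub>v (A *\<^sub>v k)) \<bullet> v = (A *\<^sub>v k) \<bullet> (A *\<^sub>v v)"
      using transpose_vec_mult_scalar[OF A vc, of "A *\<^sub>v k"] A k by auto
    also have "\<dots> = (A\<^sup>T *\<^sub>v (A *\<^sub>v v)) \<bullet> k"
      using transpose_vec_mult_scalar[OF A k(1), of "A *\<^sub>v v"] comm_scalar_prod[of "A *\<^sub>v k" m]
        A k vc by auto
    also have "\<dots> = (\<sigma> * \<sigma>) * (k \<bullet> v)"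
      using singular_triple_gram_eigenvector[OF A st] comm_scalar_prod[OF vc k(1)] vc k by simp
    also have "k \<bullet> v = 0" using kernel_perp_row_space[OF D k] v ws in_own_span[OF ws(1)] by auto
    finally show "(A\<^sup>T *\<^sub>v (A *\<^sub>v k)) \<bullet> v = 0" by simp
  qed
  have "(A\<^sup>T *\<^sub>v (A *\<^sub>v k)) \<bullet> q = 0"
    using Ak in_orthogonal_complement_span[OF ws(1)] q ws(2) unfolding orthogonal_complement_def by auto
  moreover have "q \<in> carrier_vec n" using q unfolding row_space_eq[OF D] using D by auto
  ultimately show ?thesis using transpose_vec_mult_scalar[OF A, of q "A *\<^sub>v k"] A k
      comm_scalar_prod[of "A *\<^sub>v q" m "A *\<^sub>v k"] by auto
qed

end

(* On the row space of A - B the matrix B acts as -A, on the kernel of A - B as A. *)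
lemma gram_mates_of_right_singular_basis:
  fixes A B :: "real mat"
  assumes AB: "A \<in> carrier_mat m n" "B \<in> carrier_mat m n"
    and sv: "\<forall>v\<in>set vs. \<exists>\<sigma>>0. right_singular_vector m n A \<sigma> v"
    and bas: "vec_space.is_basis_list n vs (vec_space.row_space n (A - B))"
    and ker: "\<forall>v\<in>set vs. (A + B) *\<^sub>v v = 0\<^sub>v m"
  shows "A\<^sup>T * A = B\<^sup>T * B \<and> (A + B) * (A - B)\<^sup>T = 0\<^sub>m m m"
proof -
  interpret N: real_vec_space n .
  let ?R = "N.row_space (A - B)"
  have C: "A + B \<in> carrier_mat m n" and D: "A - B \<in> carrier_mat m n" using AB by auto
  from bas have vs: "set vs \<subseteq> carrier_vec n" "N.span (set vs) = ?R"
    unfolding N.is_basis_list_def by auto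
  have sum_kills_R: "\<forall>w\<in>?R. (A + B) *\<^sub>v w = 0\<^sub>v m"
    using N.mult_vec_span_eq_0[OF C vs(1) ker] vs(2) by auto
  note gram_perp = N.right_singular_basis_kernel_orthogonal[OF AB(1) D vs sv]
  obtain S where S: "orthonormal n S" "card S = n"
    and ev: "\<forall>p\<in>S. \<exists>\<nu>. (A - B)\<^sup>T *\<^sub>v ((A - B) *\<^sub>v p) = \<nu> \<cdot>\<^sub>v p"
    using N.gram_orthonormal_eigenbasis[OF D] by blast
  have Sc: "S \<subseteq> carrier_vec n" using orthonormal_carrier[OF S(1)] .
  have split: "(A - B) *\<^sub>v q = 0\<^sub>v m \<or> q \<in> ?R" if "q \<in> S" for q
    using N.gram_eigenvector_in_row_space[OF D] ev that Sc by blast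
  have sign: "B *\<^sub>v q = (if (A - B) *\<^sub>v q = 0\<^sub>v m then A *\<^sub>v q else - (A *\<^sub>v q))" if q: "q \<in> S" for q
  proof -
    have qc: "q \<in> carrier_vec n" using q Sc by auto
    show ?thesis
    proof (cases "(A - B) *\<^sub>v q = 0\<^sub>v m")
      case True
      thus ?thesis using mult_vec_of_diff_kernel[OF AB qc] by simp
    next
      case False
      hence "(A + B) *\<^sub>v q = 0\<^sub>v m" using split[OF q] sum_kills_R by blast
      thus ?thesis using mult_vec_of_sum_kernel(1)[OF AB qc] False by simp
    qed
  qed
  have "\<forall>q\<in>S. \<forall>k\<in>S. (B *\<^sub>v q) \<bullet> (B *\<^sub>v k) = (A *\<^sub>v q) \<bullet> (A *\<^sub>v k)"
  proof (intro ballI)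
    fix q k assume q: "q \<in> S" and k: "k \<in> S"
    have qc: "q \<in> carrier_vec n" and kc: "k \<in> carrier_vec n" using q k Sc by auto
    have Aq: "A *\<^sub>v q \<in> carrier_vec m" and Ak: "A *\<^sub>v k \<in> carrier_vec m" using AB qc kc by auto
    consider "(A - B) *\<^sub>v q = 0\<^sub>v m" "(A - B) *\<^sub>v k = 0\<^sub>v m"
      | "(A - B) *\<^sub>v q \<noteq> 0\<^sub>v m" "(A - B) *\<^sub>v k \<noteq> 0\<^sub>v m"
      | "(A - B) *\<^sub>v q = 0\<^sub>v m" "(A - B) *\<^sub>v k \<noteq> 0\<^sub>v m"
      | "(A - B) *\<^sub>v q \<noteq> 0\<^sub>v m" "(A - B) *\<^sub>v k = 0\<^sub>v m" by blast
    thus "(B *\<^sub>v q) \<bullet> (B *\<^sub>v k) = (A *\<^sub>v q) \<bullet> (A *\<^sub>v k)"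
    proof cases
      case 3
      have "(A *\<^sub>v k) \<bullet> (A *\<^sub>v q) = 0" using gram_perp[OF qc 3(1)] split[OF k] 3(2) by blast
      hence "(A *\<^sub>v q) \<bullet> (A *\<^sub>v k) = 0" using comm_scalar_prod[OF Aq Ak] by simp
      thus ?thesis unfolding sign[OF q] sign[OF k] using 3 Aq Ak by simp
    next
      case 4
      have "(A *\<^sub>v q) \<bullet> (A *\<^sub>v k) = 0" using gram_perp[OF kc 4(2)] split[OF q] 4(1) by blast
      thus ?thesis unfolding sign[OF q] sign[OF k] using 4 Aq Ak by simp
    qed (simp_all add: sign[OF q] sign[OF k] Aq Ak)
  qed
  thus ?thesis using N.gram_eq_of_orthonormal_basis[OF AB S]
    N.mult_transpose_eq_0_of_row_space_kernel[OF C D sum_kills_R] by blast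
qed

section \<open>Changing the signs of singular values\<close>

lemma mult_transpose_orthogonal_factor:
  fixes U V X Y :: "real mat"
  assumes U: "U \<in> carrier_mat m m" and V: "V \<in> carrier_mat n n" and VV: "V\<^sup>T * V = 1\<^sub>m n"
    and X: "X \<in> carrier_mat m n" and Y: "Y \<in> carrier_mat m n"
  shows "(U * X * V\<^sup>T) * (U * Y * V\<^sup>T)\<^sup>T = U * (X * Y\<^sup>T) * U\<^sup>T"
proof -
  have UX: "U * X \<in> carrier_mat m n" and UY: "U * Y \<in> carrier_mat m n" using U X Y by auto
  have VT: "V\<^sup>T \<in> carrier_mat n n" and YT: "Y\<^sup>T \<in> carrier_mat n m" and UT: "U\<^sup>T \<in> carrier_mat m m"
    using V Y U by auto
  have YU: "Y\<^sup>T * U\<^sup>T \<in> carrier_mat n m" using YT UT by auto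
  have "(U * Y * V\<^sup>T)\<^sup>T = V\<^sup>T\<^sup>T * (U * Y)\<^sup>T" by (rule transpose_mult[OF UY VT])
  also have "(U * Y)\<^sup>T = Y\<^sup>T * U\<^sup>T" by (rule transpose_mult[OF U Y])
  finally have e: "(U * Y * V\<^sup>T)\<^sup>T = V * (Y\<^sup>T * U\<^sup>T)" by simp
  have "(U * X * V\<^sup>T) * (V * (Y\<^sup>T * U\<^sup>T)) = (U * X) * ((V\<^sup>T * V) * (Y\<^sup>T * U\<^sup>T))"
    using UX VT V YU by (simp add: assoc_mult_mat[of _ m n _ n _ m] assoc_mult_mat[of _ n n _ n _ m])
  also have "\<dots> = (U * X) * (Y\<^sup>T * U\<^sup>T)" unfolding VV using left_mult_one_mat[OF YU] by simp
  also have "\<dots> = U * (X * (Y\<^sup>T * U\<^sup>T))" by (rule assoc_mult_mat[OF U X YU])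
  also have "X * (Y\<^sup>T * U\<^sup>T) = (X * Y\<^sup>T) * U\<^sup>T" by (rule assoc_mult_mat[OF X YT UT, symmetric])
  also have "U * ((X * Y\<^sup>T) * U\<^sup>T) = U * (X * Y\<^sup>T) * U\<^sup>T"
    by (rule assoc_mult_mat[symmetric]) (use U X YT UT in auto)
  finally show ?thesis unfolding e .
qed

lemma transpose_mult_orthogonal_factor:
  fixes U V X Y :: "real mat"
  assumes U: "U \<in> carrier_mat m m" and UU: "U\<^sup>T * U = 1\<^sub>m m" and V: "V \<in> carrier_mat n n"
    and X: "X \<in> carrier_mat m n" and Y: "Y \<in> carrier_mat m n"
  shows "(U * X * V\<^sup>T)\<^sup>T * (U * Y * V\<^sup>T) = V * (X\<^sup>T * Y) * V\<^sup>T"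
proof -
  have tr: "(U * Z * V\<^sup>T)\<^sup>T = V * Z\<^sup>T * U\<^sup>T" if Z: "Z \<in> carrier_mat m n" for Z
  proof -
    have "(U * Z * V\<^sup>T)\<^sup>T = V\<^sup>T\<^sup>T * (U * Z)\<^sup>T" by (rule transpose_mult) (use U Z V in auto)
    also have "(U * Z)\<^sup>T = Z\<^sup>T * U\<^sup>T" by (rule transpose_mult[OF U Z])
    finally show ?thesis using V Z U by (simp add: assoc_mult_mat[of V n n "Z\<^sup>T" m "U\<^sup>T" m])
  qed
  have "(V * X\<^sup>T * U\<^sup>T) * (V * Y\<^sup>T * U\<^sup>T)\<^sup>T = V * (X\<^sup>T * Y\<^sup>T\<^sup>T) * V\<^sup>T"
    by (rule mult_transpose_orthogonal_factor[OF V U UU]) (use X Y in auto)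
  moreover have "(V * Y\<^sup>T * U\<^sup>T)\<^sup>T = U * Y * V\<^sup>T"
    using arg_cong[OF tr[OF Y], of transpose_mat] by simp
  ultimately show ?thesis using tr[OF X] by simp
qed

lemma index_mult_transpose:
  fixes X Y :: "'a :: comm_ring mat"
  assumes "X \<in> carrier_mat m n" "Y \<in> carrier_mat k n" "i < m" "j < k"
  shows "(X * Y\<^sup>T) $$ (i,j) = (\<Sum>l\<in>{0..<n}. X $$ (i,l) * Y $$ (j,l))"
  using assms by (simp add: scalar_prod_def)

lemma index_transpose_mult:
  fixes X Y :: "'a :: comm_ring mat"
  assumes "X \<in> carrier_mat m n" "Y \<in> carrier_mat m k" "i < n" "j < k"
  shows "(X\<^sup>T * Y) $$ (i,j) = (\<Sum>l\<in>{0..<m}. X $$ (l,i) * Y $$ (l,j))"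
  using assms by (simp add: scalar_prod_def)

lemma signed_rect_diag_products:
  fixes \<Sigma> Z :: "real mat"
  assumes \<Sigma>: "\<Sigma> \<in> carrier_mat m n" and off: "\<And>i j. i < m \<Longrightarrow> j < n \<Longrightarrow> i \<noteq> j \<Longrightarrow> \<Sigma> $$ (i,j) = 0"
    and Z: "Z \<in> carrier_mat m n" and Z_entry: "\<And>i j. i < m \<Longrightarrow> j < n \<Longrightarrow> Z $$ (i,j) = s i * \<Sigma> $$ (i,j)"
    and s: "\<And>i. i < m \<Longrightarrow> s i * s i = 1"
  shows "Z * Z\<^sup>T = \<Sigma> * \<Sigma>\<^sup>T" "Z\<^sup>T * Z = \<Sigma>\<^sup>T * \<Sigma>" "\<Sigma> * Z\<^sup>T = Z * \<Sigma>\<^sup>T"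
proof -
  have cross: "\<Sigma> $$ (i,l) * \<Sigma> $$ (j,l) = 0" if "i < m" "j < m" "l < n" "i \<noteq> j" for i j l
    using off that by (cases "i = l") auto
  show "Z * Z\<^sup>T = \<Sigma> * \<Sigma>\<^sup>T"
  proof (rule eq_matI)
    fix i j assume "i < dim_row (\<Sigma> * \<Sigma>\<^sup>T)" "j < dim_col (\<Sigma> * \<Sigma>\<^sup>T)"
    hence ij: "i < m" "j < m" using \<Sigma> by auto
    have "Z $$ (i,l) * Z $$ (j,l) = \<Sigma> $$ (i,l) * \<Sigma> $$ (j,l)" if "l < n" for l
      using Z_entry[OF ij(1) that] Z_entry[OF ij(2) that] s[OF ij(1)] cross[OF ij that]
      by (cases "i = j") (auto simp: algebra_simps)
    thus "(Z * Z\<^sup>T) $$ (i,j) = (\<Sigma> * \<Sigma>\<^sup>T) $$ (i,j)"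
      unfolding index_mult_transpose[OF Z Z ij] index_mult_transpose[OF \<Sigma> \<Sigma> ij] by simp
  qed (use Z \<Sigma> in auto)
  show "Z\<^sup>T * Z = \<Sigma>\<^sup>T * \<Sigma>"
  proof (rule eq_matI)
    fix i j assume "i < dim_row (\<Sigma>\<^sup>T * \<Sigma>)" "j < dim_col (\<Sigma>\<^sup>T * \<Sigma>)"
    hence ij: "i < n" "j < n" using \<Sigma> by auto
    have "Z $$ (l,i) * Z $$ (l,j) = \<Sigma> $$ (l,i) * \<Sigma> $$ (l,j)" if "l < m" for l
      using Z_entry[OF that ij(1)] Z_entry[OF that ij(2)] s[OF that] by (simp add: algebra_simps)
    thus "(Z\<^sup>T * Z) $$ (i,j) = (\<Sigma>\<^sup>T * \<Sigma>) $$ (i,j)"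
      unfolding index_transpose_mult[OF Z Z ij] index_transpose_mult[OF \<Sigma> \<Sigma> ij] by simp
  qed (use Z \<Sigma> in auto)
  show "\<Sigma> * Z\<^sup>T = Z * \<Sigma>\<^sup>T"
  proof (rule eq_matI)
    fix i j assume "i < dim_row (Z * \<Sigma>\<^sup>T)" "j < dim_col (Z * \<Sigma>\<^sup>T)"
    hence ij: "i < m" "j < m" using Z \<Sigma> by auto
    have "\<Sigma> $$ (i,l) * Z $$ (j,l) = Z $$ (i,l) * \<Sigma> $$ (j,l)" if "l < n" for l
      using Z_entry[OF ij(1) that] Z_entry[OF ij(2) that] cross[OF ij that]
      by (cases "i = j") (auto simp: algebra_simps)
    thus "(\<Sigma> * Z\<^sup>T) $$ (i,j) = (Z * \<Sigma>\<^sup>T) $$ (i,j)"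
      unfolding index_mult_transpose[OF \<Sigma> Z ij] index_mult_transpose[OF Z \<Sigma> ij] by simp
  qed (use Z \<Sigma> in auto)
qed

lemma sign_change_sv_imp_gram:
  fixes A B :: "real mat"
  assumes "sign_change_sv m n k A B"
  shows "A * A\<^sup>T = B * B\<^sup>T \<and> A\<^sup>T * A = B\<^sup>T * B \<and> A * B\<^sup>T = B * A\<^sup>T"
proof -
  obtain U V \<Sigma> S where U: "orthogonal_real_mat m U" and V: "orthogonal_real_mat n V"
    and \<Sigma>: "rect_diag_nonneg m n \<Sigma>" and A: "A = U * \<Sigma> * V\<^sup>T"
    and S: "S \<in> carrier_mat m m" "diagonal_mat S" "\<forall>i<m. S $$ (i,i) = 1 \<or> S $$ (i,i) = -1"
    and B: "B = U * S * \<Sigma> * V\<^sup>T"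
    using assms unfolding sign_change_sv_def by blast
  have Uc: "U \<in> carrier_mat m m" "U\<^sup>T * U = 1\<^sub>m m" and Vc: "V \<in> carrier_mat n n" "V\<^sup>T * V = 1\<^sub>m n"
    using U V unfolding orthogonal_real_mat_def by auto
  have \<Sigma>c: "\<Sigma> \<in> carrier_mat m n" using \<Sigma> unfolding rect_diag_nonneg_def by auto
  have Y: "S * \<Sigma> \<in> carrier_mat m n" using S \<Sigma>c by auto
  have B': "B = U * (S * \<Sigma>) * V\<^sup>T" unfolding B using Uc S \<Sigma>c by (simp add: assoc_mult_mat[of U m m S m \<Sigma> n])
  have Y_entry: "(S * \<Sigma>) $$ (i,j) = S $$ (i,i) * \<Sigma> $$ (i,j)" if "i < m" "j < n" for i j
  proof -
    have "(S * \<Sigma>) $$ (i,j) = (\<Sum>l\<in>{0..<m}. S $$ (i,l) * \<Sigma> $$ (l,j))"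
      using S \<Sigma>c that by (simp add: scalar_prod_def)
    also have "\<dots> = (\<Sum>l\<in>{0..<m}. if l = i then S $$ (i,i) * \<Sigma> $$ (i,j) else 0)"
      using S(1,2) that unfolding diagonal_mat_def by (intro sum.cong) auto
    finally show ?thesis using that by simp
  qed
  have "S $$ (i,i) * S $$ (i,i) = 1" if "i < m" for i using S(3) that by auto
  note diag = signed_rect_diag_products[OF \<Sigma>c _ Y Y_entry this]
  note AAT = mult_transpose_orthogonal_factor[OF Uc(1) Vc] and ATA = transpose_mult_orthogonal_factor[OF Uc Vc(1)]
  have off: "\<Sigma> $$ (i,j) = 0" if "i < m" "j < n" "i \<noteq> j" for i j
    using \<Sigma> that unfolding rect_diag_nonneg_def by auto
  show ?thesis unfolding A B' AAT[OF \<Sigma>c \<Sigma>c] AAT[OF Y Y] AAT[OF \<Sigma>c Y] AAT[OF Y \<Sigma>c]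
    ATA[OF \<Sigma>c \<Sigma>c] ATA[OF Y Y] using diag[OF off] by simp
qed

lemma distinct_list_nested_prefixes:
  assumes X: "finite X" and Y: "Y1 \<subseteq> Y2" "Y2 \<subseteq> X"
  shows "\<exists>ps. distinct ps \<and> set ps = X \<and> (\<forall>j<length ps. ps ! j \<in> Y1 \<longleftrightarrow> j < card Y1)
    \<and> (\<forall>j<length ps. ps ! j \<in> Y2 \<longleftrightarrow> j < card Y2)"
proof -
  have fin: "finite Y1" "finite (Y2 - Y1)" "finite (X - Y2)" using X Y by (auto intro: finite_subset)
  obtain l1 l2 l3 where l: "set l1 = Y1" "distinct l1" "set l2 = Y2 - Y1" "distinct l2"
    "set l3 = X - Y2" "distinct l3"
    using finite_distinct_list[OF fin(1)] finite_distinct_list[OF fin(2)] finite_distinct_list[OF fin(3)]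
    by metis
  have len: "length l1 = card Y1" "length l1 + length l2 = card Y2"
    using distinct_card[OF l(2)] distinct_card[OF l(4)] l(1,3) Y fin card_Diff_subset[of Y1 Y2]
      card_mono[of Y2 Y1] by (auto simp: finite_subset)
  define ps where "ps = l1 @ l2 @ l3"
  have "distinct ps" "set ps = X" unfolding ps_def using l Y by auto
  moreover have "ps ! j \<in> Y1 \<longleftrightarrow> j < length l1" "ps ! j \<in> Y2 \<longleftrightarrow> j < length l1 + length l2"
    if "j < length ps" for j
  proof -
    consider "j < length l1" | "length l1 \<le> j" "j < length l1 + length l2"
      | "length l1 + length l2 \<le> j" by linarith
    hence "(ps ! j \<in> Y1 \<longleftrightarrow> j < length l1) \<and> (ps ! j \<in> Y2 \<longleftrightarrow> j < length l1 + length l2)"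
    proof cases
      case 1 thus ?thesis using l Y nth_mem[OF 1] unfolding ps_def by (auto simp: nth_append)
    next
      case 2 thus ?thesis using l nth_mem[of "j - length l1" l2] unfolding ps_def by (auto simp: nth_append)
    next
      case 3
      hence "j - length l1 - length l2 < length l3" using that unfolding ps_def by simp
      thus ?thesis using l Y 3 nth_mem[of "j - length l1 - length l2" l3] unfolding ps_def
        by (auto simp: nth_append)
    qed
    thus "ps ! j \<in> Y1 \<longleftrightarrow> j < length l1" "ps ! j \<in> Y2 \<longleftrightarrow> j < length l1 + length l2" by auto
  qed
  ultimately show ?thesis using len by metis
qed

lemma index_mult_diag_right:
  fixes X Y :: "real mat"
  assumes X: "X \<in> carrier_mat p k" and Y: "Y \<in> carrier_mat k q"
    and off: "\<And>l j. l < k \<Longrightarrow> j < q \<Longrightarrow> l \<noteq> j \<Longrightarrow> Y $$ (l,j) = 0" and ij: "i < p" "j < q"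
  shows "(X * Y) $$ (i,j) = (if j < k then X $$ (i,j) * Y $$ (j,j) else 0)"
proof -
  have "(X * Y) $$ (i,j) = (\<Sum>l\<in>{0..<k}. X $$ (i,l) * Y $$ (l,j))" using X Y ij by (simp add: scalar_prod_def)
  also have "\<dots> = (\<Sum>l\<in>{0..<k}. if l = j then X $$ (i,j) * Y $$ (j,j) else 0)"
    using off ij by (intro sum.cong) auto
  finally show ?thesis by simp
qed

lemma (in real_vec_space) orthogonal_mat_with_first_cols:
  assumes "distinct us" "orthonormal n (set us)"
  shows "\<exists>U. orthogonal_real_mat n U \<and> length us \<le> n \<and> (\<forall>i<n. \<forall>j<length us. U $$ (i,j) = us ! j $ i)"
proof -
  obtain T where T: "set us \<subseteq> T" "orthonormal n T" "card T = n" using orthonormal_extend[OF assms(2)] by blast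
  obtain ws where ws: "set ws = T - set us" "distinct ws"
    using finite_distinct_list[of "T - set us"] orthonormal_finite[OF T(2)] by auto
  have "set (us @ ws) = T" "distinct (us @ ws)" using T ws assms by auto
  hence "orthogonal_real_mat n (mat_of_cols n (us @ ws))" "length (us @ ws) = n"
    using orthogonal_real_mat_of_cols T distinct_card[of "us @ ws"] by auto
  thus ?thesis by (intro exI[of _ "mat_of_cols n (us @ ws)"]) (auto simp: mat_of_cols_index nth_append)
qed

lemma normalized_eigenvector_images_orthonormal:
  fixes A :: "real mat"
  assumes A: "A \<in> carrier_mat m n" and ps: "distinct ps" "orthonormal n (set ps)" "r \<le> length ps"
    and ev: "\<forall>p\<in>set ps. \<exists>\<mu>. A\<^sup>T *\<^sub>v (A *\<^sub>v p) = \<mu> \<cdot>\<^sub>v p" and nz: "\<forall>j<r. A *\<^sub>v (ps ! j) \<noteq> 0\<^sub>v m"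
  defines "u \<equiv> \<lambda>j. (1 / sqrt ((A *\<^sub>v ps ! j) \<bullet> (A *\<^sub>v ps ! j))) \<cdot>\<^sub>v (A *\<^sub>v ps ! j)"
  shows "distinct (map u [0..<r]) \<and> orthonormal m (set (map u [0..<r]))"
proof -
  have p: "ps ! j \<in> carrier_vec n" "ps ! j \<bullet> ps ! j = 1" "ps ! j \<in> set ps" if "j < r" for j
    using ps that nth_mem[of j ps] unfolding orthonormal_def by auto
  have Ap: "A *\<^sub>v ps ! j \<in> carrier_vec m" if "j < r" for j using A p[OF that] by auto
  have u: "u j \<in> carrier_vec m" "u j \<bullet> u j = 1" if "j < r" for j
    unfolding u_def using scalar_prod_normalize_self[OF Ap[OF that]] nz that Ap[OF that] by auto
  have u_orth: "u i \<bullet> u j = 0" if ij: "i < r" "j < r" "i \<noteq> j" for i j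
  proof -
    obtain \<mu> where \<mu>: "A\<^sup>T *\<^sub>v (A *\<^sub>v ps ! i) = \<mu> \<cdot>\<^sub>v ps ! i" using ev p(3)[OF ij(1)] by blast
    have "ps ! i \<bullet> ps ! j = 0"
      using ps ij p(3) unfolding orthonormal_def by (auto simp: nth_eq_iff_index_eq)
    hence "(A *\<^sub>v ps ! i) \<bullet> (A *\<^sub>v ps ! j) = 0"
      using transpose_vec_mult_scalar[OF A p(1)[OF ij(2)], of "A *\<^sub>v ps ! i"] \<mu> A p(1)[OF ij(1)] p(1)[OF ij(2)] by auto
    thus ?thesis unfolding u_def using Ap ij by auto
  qed
  have "orthonormal m (set (map u [0..<r]))" unfolding orthonormal_def using u by auto (metis u_orth)
  moreover have "inj_on u {0..<r}"
    using u(2) u_orth by (intro inj_onI) (metis atLeastLessThan_iff zero_neq_one)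
  ultimately show ?thesis by (simp add: distinct_map)
qed

lemma svd_of_eigenbasis:
  fixes A :: "real mat"
  assumes A: "A \<in> carrier_mat m n"
    and ps: "distinct ps" "orthonormal n (set ps)" "length ps = n"
    and ev: "\<forall>p\<in>set ps. \<exists>\<mu>. A\<^sup>T *\<^sub>v (A *\<^sub>v p) = \<mu> \<cdot>\<^sub>v p"
    and r: "r \<le> n" "\<forall>j<n. A *\<^sub>v (ps ! j) \<noteq> 0\<^sub>v m \<longleftrightarrow> j < r"
  shows "\<exists>U \<Sigma>. orthogonal_real_mat m U \<and> rect_diag_nonneg m n \<Sigma> \<and> A * mat_of_cols n ps = U * \<Sigma>
    \<and> (\<forall>j<r. j < m \<and> \<Sigma> $$ (j,j) > 0)"
proof -
  interpret M: real_vec_space m .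
  have p: "ps ! j \<in> carrier_vec n" "ps ! j \<bullet> ps ! j = 1" "ps ! j \<in> set ps" if "j < n" for j
    using ps that nth_mem[of j ps] unfolding orthonormal_def by auto
  define \<sigma> where "\<sigma> j = sqrt ((A *\<^sub>v ps ! j) \<bullet> (A *\<^sub>v ps ! j))" for j
  define u where "u j = (1 / \<sigma> j) \<cdot>\<^sub>v (A *\<^sub>v ps ! j)" for j
  have u: "u j \<in> carrier_vec m" "A *\<^sub>v ps ! j = \<sigma> j \<cdot>\<^sub>v u j" "\<sigma> j > 0" if j: "j < r" for j
  proof -
    obtain \<mu> where "A\<^sup>T *\<^sub>v (A *\<^sub>v ps ! j) = \<mu> \<cdot>\<^sub>v ps ! j" using ev p(3) j r by force
    from singular_triple_of_eigenvector[OF A p(1,2) this] j r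
    show "u j \<in> carrier_vec m" "A *\<^sub>v ps ! j = \<sigma> j \<cdot>\<^sub>v u j" "\<sigma> j > 0"
      unfolding \<sigma>_def u_def singular_triple_def by auto
  qed
  have "distinct (map u [0..<r]) \<and> orthonormal m (set (map u [0..<r]))"
    using normalized_eigenvector_images_orthonormal[OF A ps(1,2) _ ev] r ps(3)
    unfolding u_def \<sigma>_def by auto
  then obtain U where U: "orthogonal_real_mat m U" and rm: "r \<le> m"
    and U_col: "\<forall>i<m. \<forall>j<r. U $$ (i,j) = u j $ i"
    using M.orthogonal_mat_with_first_cols[of "map u [0..<r]"] by auto
  define \<Sigma> where "\<Sigma> = mat m n (\<lambda>(i,j). if i = j \<and> i < r then \<sigma> i else 0)"
  have \<Sigma>: "rect_diag_nonneg m n \<Sigma>" unfolding rect_diag_nonneg_def \<Sigma>_def \<sigma>_def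
    by (auto simp: real_scalar_prod_self_ge_0)
  have "A * mat_of_cols n ps = U * \<Sigma>"
  proof (rule eq_matI)
    fix i j assume "i < dim_row (U * \<Sigma>)" "j < dim_col (U * \<Sigma>)"
    hence ij: "i < m" "j < n" using U unfolding \<Sigma>_def orthogonal_real_mat_def by auto
    have "(U * \<Sigma>) $$ (i,j) = (if j < m then U $$ (i,j) * \<Sigma> $$ (j,j) else 0)"
      by (rule index_mult_diag_right[OF _ _ _ ij]) (use U in \<open>auto simp: \<Sigma>_def orthogonal_real_mat_def\<close>)
    also have "\<dots> = (A *\<^sub>v ps ! j) $ i"
    proof (cases "j < r")
      case True
      have "(A *\<^sub>v ps ! j) $ i = \<sigma> j * u j $ i" unfolding u(2)[OF True] using u(1)[OF True] ij by simp
      thus ?thesis using True U_col ij rm unfolding \<Sigma>_def by simp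
    next
      case False
      hence "A *\<^sub>v ps ! j = 0\<^sub>v m" using r(2) ij by auto
      thus ?thesis using False ij unfolding \<Sigma>_def by simp
    qed
    finally show "(A * mat_of_cols n ps) $$ (i,j) = (U * \<Sigma>) $$ (i,j)"
      using A ps(3) ij col_mat_of_cols[of j ps n] p(1)[OF ij(2)] by simp
  qed (use A U ps(3) in \<open>auto simp: \<Sigma>_def orthogonal_real_mat_def\<close>)
  moreover have "\<forall>j<r. j < m \<and> \<Sigma> $$ (j,j) > 0" using u(3) rm r unfolding \<Sigma>_def by auto
  ultimately show ?thesis using U \<Sigma> by blast
qed

lemma sign_change_sv_of_svd:
  fixes A B U V \<Sigma> :: "real mat"
  assumes AB: "A \<in> carrier_mat m n" "B \<in> carrier_mat m n"
    and U: "orthogonal_real_mat m U" and V: "orthogonal_real_mat n V" and \<Sigma>: "rect_diag_nonneg m n \<Sigma>"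
    and AV: "A * V = U * \<Sigma>" and k: "k \<le> n" "\<forall>j<k. j < m \<and> \<Sigma> $$ (j,j) > 0"
    and BV: "\<forall>j<n. B *\<^sub>v col V j = (if j < k then -1 else 1) \<cdot>\<^sub>v (A *\<^sub>v col V j)"
  shows "sign_change_sv m n k A B"
proof -
  have Uc: "U \<in> carrier_mat m m" and Vc: "V \<in> carrier_mat n n" "V\<^sup>T * V = 1\<^sub>m n"
    using U V unfolding orthogonal_real_mat_def by auto
  have \<Sigma>c: "\<Sigma> \<in> carrier_mat m n" and \<Sigma>_off: "\<And>i j. i < m \<Longrightarrow> j < n \<Longrightarrow> i \<noteq> j \<Longrightarrow> \<Sigma> $$ (i,j) = 0"
    using \<Sigma> unfolding rect_diag_nonneg_def by auto
  have km: "k \<le> m" using k(2) by (cases k) auto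
  have VVT: "V * V\<^sup>T = 1\<^sub>m n" using mat_mult_left_right_inverse[of "V\<^sup>T" n V] Vc by auto
  have right_cancel: "X = X * V * V\<^sup>T" if "X \<in> carrier_mat m n" for X
    using that Vc assoc_mult_mat[OF that Vc(1), of "V\<^sup>T" n] VVT by auto
  define s where "s i = (if i < k then -1 else (1::real))" for i
  define S where "S = mat m m (\<lambda>(i,j). if i = j then s i else 0)"
  have Sc: "S \<in> carrier_mat m m" and S_off: "\<And>i j. i < m \<Longrightarrow> j < m \<Longrightarrow> i \<noteq> j \<Longrightarrow> S $$ (i,j) = 0"
    unfolding S_def by auto
  have "B * V = U * S * \<Sigma>"
  proof (rule eq_matI)
    fix i j assume "i < dim_row (U * S * \<Sigma>)" "j < dim_col (U * S * \<Sigma>)"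
    hence ij: "i < m" "j < n" using Uc \<Sigma>c by auto
    have Bc: "(B * V) $$ (i,j) = (B *\<^sub>v col V j) $ i" and Ac: "(A * V) $$ (i,j) = (A *\<^sub>v col V j) $ i"
      using AB Vc ij by auto
    have "B *\<^sub>v col V j = s j \<cdot>\<^sub>v (A *\<^sub>v col V j)" using BV ij unfolding s_def by auto
    hence "(B * V) $$ (i,j) = s j * (A * V) $$ (i,j)" unfolding Bc Ac using AB Vc ij by simp
    also have "(A * V) $$ (i,j) = (if j < m then U $$ (i,j) * \<Sigma> $$ (j,j) else 0)"
      unfolding AV by (rule index_mult_diag_right[OF Uc \<Sigma>c \<Sigma>_off ij])
    also have "s j * \<dots> = (U * S * \<Sigma>) $$ (i,j)"
      using index_mult_diag_right[OF mult_carrier_mat[OF Uc Sc] \<Sigma>c \<Sigma>_off ij]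
        index_mult_diag_right[OF Uc Sc S_off ij(1)] unfolding S_def by auto
    finally show "(B * V) $$ (i,j) = (U * S * \<Sigma>) $$ (i,j)" .
  qed (use AB Vc Uc \<Sigma>c in auto)
  hence B_eq: "B = U * S * \<Sigma> * V\<^sup>T" using right_cancel[OF AB(2)] by simp
  have A_eq: "A = U * \<Sigma> * V\<^sup>T" using right_cancel[OF AB(1)] AV by simp
  have "{i. i < m \<and> S $$ (i,i) = -1} = {..<k}"
    using km unfolding S_def s_def by (auto split: if_splits)
  hence card: "card {i. i < m \<and> S $$ (i,i) = -1} = k" by simp
  have S_props: "diagonal_mat S" "\<forall>i<m. S $$ (i,i) = 1 \<or> S $$ (i,i) = -1"
    "\<forall>i<m. S $$ (i,i) = -1 \<longrightarrow> i < n \<and> \<Sigma> $$ (i,i) > 0"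
    using k unfolding S_def s_def diagonal_mat_def by auto
  show ?thesis unfolding sign_change_sv_def
    by (rule exI[of _ U], rule exI[of _ V], rule exI[of _ \<Sigma>], rule exI[of _ S])
      (use U V \<Sigma> A_eq Sc S_props card B_eq in blast)
qed

lemma gram_mates_ordered_eigenbasis:
  fixes A B :: "real mat"
  assumes AB: "A \<in> carrier_mat m n" "B \<in> carrier_mat m n"
    and G: "A\<^sup>T * A = B\<^sup>T * B" and CDT: "(A + B) * (A - B)\<^sup>T = 0\<^sub>m m m"
    and k: "k = vec_space.rank m (A - B)"
  shows "\<exists>ps r. distinct ps \<and> orthonormal n (set ps) \<and> length ps = n
    \<and> (\<forall>p\<in>set ps. \<exists>\<mu>. A\<^sup>T *\<^sub>v (A *\<^sub>v p) = \<mu> \<cdot>\<^sub>v p) \<and> k \<le> r \<and> r \<le> n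
    \<and> (\<forall>j<n. A *\<^sub>v ps ! j \<noteq> 0\<^sub>v m \<longleftrightarrow> j < r)
    \<and> (\<forall>j<n. B *\<^sub>v ps ! j = (if j < k then -1 else 1) \<cdot>\<^sub>v (A *\<^sub>v ps ! j))"
proof -
  interpret N: real_vec_space n .
  obtain S where S: "orthonormal n S" "card S = n" and SP: "\<forall>p\<in>S.
      (\<exists>\<mu>. A\<^sup>T *\<^sub>v (A *\<^sub>v p) = \<mu> \<cdot>\<^sub>v p) \<and> (\<exists>\<nu>. (A - B)\<^sup>T *\<^sub>v ((A - B) *\<^sub>v p) = \<nu> \<cdot>\<^sub>v p) \<and>
      ((A + B) *\<^sub>v p = 0\<^sub>v m \<or> (A - B) *\<^sub>v p = 0\<^sub>v m)"
    using gram_mates_eigenbasis[OF AB G CDT] by blast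
  have Sc: "S \<subseteq> carrier_vec n" "finite S" using orthonormal_carrier[OF S(1)] N.orthonormal_finite[OF S(1)] by auto
  define Y1 where "Y1 = {p\<in>S. (A - B) *\<^sub>v p \<noteq> 0\<^sub>v m}"
  define Y2 where "Y2 = {p\<in>S. A *\<^sub>v p \<noteq> 0\<^sub>v m}"
  have Y1_sum_kernel: "(A + B) *\<^sub>v p = 0\<^sub>v m" if "p \<in> Y1" for p using SP that unfolding Y1_def by auto
  have "Y1 \<subseteq> Y2"
  proof
    fix p assume p: "p \<in> Y1"
    hence pS: "p \<in> S" and Dp: "(A - B) *\<^sub>v p \<noteq> 0\<^sub>v m" unfolding Y1_def by auto
    have "(A - B) *\<^sub>v p = 2 \<cdot>\<^sub>v (A *\<^sub>v p)"
      using mult_vec_of_sum_kernel(2)[OF AB _ Y1_sum_kernel[OF p]] pS Sc by auto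
    hence "A *\<^sub>v p \<noteq> 0\<^sub>v m" using Dp by auto
    thus "p \<in> Y2" using pS unfolding Y2_def by auto
  qed
  moreover have "Y2 \<subseteq> S" unfolding Y2_def by auto
  ultimately obtain ps where ps: "distinct ps" "set ps = S"
    and Y1: "\<forall>j<length ps. ps ! j \<in> Y1 \<longleftrightarrow> j < card Y1" and Y2: "\<forall>j<length ps. ps ! j \<in> Y2 \<longleftrightarrow> j < card Y2"
    using distinct_list_nested_prefixes[OF Sc(2)] by blast
  have len: "length ps = n" using distinct_card[OF ps(1)] ps(2) S(2) by simp
  have psS: "ps ! j \<in> S" if "j < n" for j using ps(2) len that nth_mem by blast
  have pc: "ps ! j \<in> carrier_vec n" if "j < n" for j using psS[OF that] Sc by auto
  have D: "A - B \<in> carrier_mat m n" using AB by auto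
  have "\<forall>p\<in>S. \<exists>\<nu>. (A - B)\<^sup>T *\<^sub>v ((A - B) *\<^sub>v p) = \<nu> \<cdot>\<^sub>v p" using SP by blast
  hence k_eq: "k = card Y1" unfolding k Y1_def using rank_eq_card_eigenbasis[OF D S(1,2)] by blast
  have "B *\<^sub>v ps ! j = (if j < k then -1 else 1) \<cdot>\<^sub>v (A *\<^sub>v ps ! j)" if j: "j < n" for j
  proof (cases "j < k")
    case True
    hence "(A + B) *\<^sub>v ps ! j = 0\<^sub>v m" using Y1 Y1_sum_kernel j len k_eq by auto
    thus ?thesis using mult_vec_of_sum_kernel(1)[OF AB pc[OF j]] True AB pc[OF j] by (auto intro!: eq_vecI)
  next
    case False
    hence "(A - B) *\<^sub>v ps ! j = 0\<^sub>v m" using Y1 psS[OF j] j len k_eq unfolding Y1_def by auto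
    thus ?thesis using mult_vec_of_diff_kernel[OF AB pc[OF j]] False AB pc[OF j] by auto
  qed
  moreover have "k \<le> card Y2" "card Y2 \<le> n"
    using k_eq card_mono[OF _ \<open>Y1 \<subseteq> Y2\<close>] card_mono[OF Sc(2) \<open>Y2 \<subseteq> S\<close>] Sc(2) \<open>Y2 \<subseteq> S\<close> S(2)
    by (auto intro: finite_subset)
  moreover have "\<forall>j<n. A *\<^sub>v ps ! j \<noteq> 0\<^sub>v m \<longleftrightarrow> j < card Y2" using Y2 psS len unfolding Y2_def by auto
  moreover have "\<forall>p\<in>set ps. \<exists>\<mu>. A\<^sup>T *\<^sub>v (A *\<^sub>v p) = \<mu> \<cdot>\<^sub>v p" using ps SP by blast
  ultimately show ?thesis using ps S len by metis
qed

theorem sign_change_sv_of_gram_mates: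
  fixes A B :: "real mat"
  assumes AB: "A \<in> carrier_mat m n" "B \<in> carrier_mat m n"
    and G: "A\<^sup>T * A = B\<^sup>T * B" and CDT: "(A + B) * (A - B)\<^sup>T = 0\<^sub>m m m"
    and k: "k = vec_space.rank m (A - B)"
  shows "sign_change_sv m n k A B"
proof -
  obtain ps r where ps: "distinct ps" "orthonormal n (set ps)" "length ps = n"
    and ev: "\<forall>p\<in>set ps. \<exists>\<mu>. A\<^sup>T *\<^sub>v (A *\<^sub>v p) = \<mu> \<cdot>\<^sub>v p" and r: "k \<le> r" "r \<le> n"
    and nz: "\<forall>j<n. A *\<^sub>v ps ! j \<noteq> 0\<^sub>v m \<longleftrightarrow> j < r"
    and sign: "\<forall>j<n. B *\<^sub>v ps ! j = (if j < k then -1 else 1) \<cdot>\<^sub>v (A *\<^sub>v ps ! j)"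
    using gram_mates_ordered_eigenbasis[OF AB G CDT k] by blast
  obtain U \<Sigma> where U: "orthogonal_real_mat m U" and \<Sigma>: "rect_diag_nonneg m n \<Sigma>"
    and AV: "A * mat_of_cols n ps = U * \<Sigma>" and pos: "\<forall>j<r. j < m \<and> \<Sigma> $$ (j,j) > 0"
    using svd_of_eigenbasis[OF AB(1) ps ev r(2) nz] by blast
  have V: "orthogonal_real_mat n (mat_of_cols n ps)" using orthogonal_real_mat_of_cols[OF ps] .
  have "col (mat_of_cols n ps) j = ps ! j" if "j < n" for j
  proof (rule col_mat_of_cols)
    show "j < length ps" using that ps(3) by simp
    thus "ps ! j \<in> carrier_vec n" using orthonormal_carrier[OF ps(2)] nth_mem by blast
  qed
  hence "\<forall>j<n. B *\<^sub>v col (mat_of_cols n ps) j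
      = (if j < k then -1 else 1) \<cdot>\<^sub>v (A *\<^sub>v col (mat_of_cols n ps) j)" using sign by simp
  thus ?thesis using sign_change_sv_of_svd[OF AB U V \<Sigma> AV] pos r by auto
qed

lemma transpose_mult_diff_symmetric_iff:
  fixes A B :: "real mat"
  assumes AB: "A \<in> carrier_mat m n" "B \<in> carrier_mat m n"
  shows "(A\<^sup>T * (A - B))\<^sup>T = A\<^sup>T * (A - B) \<longleftrightarrow> A\<^sup>T * B = B\<^sup>T * A"
proof -
  have ABT: "A\<^sup>T \<in> carrier_mat n m" "B\<^sup>T \<in> carrier_mat n m" using AB by auto
  have "(A\<^sup>T - B\<^sup>T)\<^sup>T = A - B" using transpose_minus[OF ABT] by simp
  thus ?thesis using mult_diff_transpose_symmetric_iff[OF ABT] by simp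
qed

lemma gram_mates_symmetric_iff:
  fixes A B :: "real mat"
  assumes AB: "A \<in> carrier_mat m n" "B \<in> carrier_mat m n"
    and G1: "A * A\<^sup>T = B * B\<^sup>T" and G2: "A\<^sup>T * A = B\<^sup>T * B"
  shows "A * B\<^sup>T = B * A\<^sup>T \<longleftrightarrow> A\<^sup>T * B = B\<^sup>T * A"
proof
  show "A * B\<^sup>T = B * A\<^sup>T \<Longrightarrow> A\<^sup>T * B = B\<^sup>T * A"
    using gram_mates_symmetric_transpose_mult[OF AB G1 G2] .
  assume "A\<^sup>T * B = B\<^sup>T * A"
  hence "A\<^sup>T\<^sup>T * B\<^sup>T = B\<^sup>T\<^sup>T * A\<^sup>T"
    by (intro gram_mates_symmetric_transpose_mult[of "A\<^sup>T" n m "B\<^sup>T"]) (use AB G1 G2 in auto)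
  thus "A * B\<^sup>T = B * A\<^sup>T" by simp
qed

lemma gram_mates_iff_sign_change_sv:
  fixes A B :: "real mat"
  assumes AB: "A \<in> carrier_mat m n" "B \<in> carrier_mat m n"
    and zo: "zero_one_mat A" "zero_one_mat B" "A \<noteq> B" and k: "k = vec_space.rank m (A - B)"
  shows "gram_mates A B \<and> (A + B) * (A - B)\<^sup>T = 0\<^sub>m m m \<longleftrightarrow> sign_change_sv m n k A B"
proof
  assume "gram_mates A B \<and> (A + B) * (A - B)\<^sup>T = 0\<^sub>m m m"
  thus "sign_change_sv m n k A B" using sign_change_sv_of_gram_mates[OF AB _ _ k]
    unfolding gram_mates_def by blast
next
  assume "sign_change_sv m n k A B"
  hence "A * A\<^sup>T = B * B\<^sup>T \<and> A\<^sup>T * A = B\<^sup>T * B \<and> A * B\<^sup>T = B * A\<^sup>T"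
    by (rule sign_change_sv_imp_gram)
  thus "gram_mates A B \<and> (A + B) * (A - B)\<^sup>T = 0\<^sub>m m m"
    using sum_mult_diff_transpose_eq_0_iff[OF AB] zo unfolding gram_mates_def by blast
qed

lemma gram_mates_iff_right_singular_basis:
  fixes A B :: "real mat"
  assumes AB: "A \<in> carrier_mat m n" "B \<in> carrier_mat m n"
    and zo: "zero_one_mat A" "zero_one_mat B" "A \<noteq> B"
  shows "gram_mates A B \<and> (A + B) * (A - B)\<^sup>T = 0\<^sub>m m m \<longleftrightarrow>
    (\<exists>vs. length vs = vec_space.rank m (A - B) \<and>
       (\<forall>v\<in>set vs. \<exists>\<sigma>>0. right_singular_vector m n A \<sigma> v) \<and>
       vec_space.is_basis_list n vs (vec_space.row_space n (A - B)) \<and>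
       (\<forall>v\<in>set vs. (A + B) *\<^sub>v v = 0\<^sub>v m))"
  (is "?P1 \<longleftrightarrow> ?P4")
proof
  assume ?P1
  thus ?P4 using right_singular_basis_of_gram_mates[OF AB] unfolding gram_mates_def by blast
next
  assume ?P4
  then obtain vs where "\<forall>v\<in>set vs. \<exists>\<sigma>>0. right_singular_vector m n A \<sigma> v"
    "vec_space.is_basis_list n vs (vec_space.row_space n (A - B))" "\<forall>v\<in>set vs. (A + B) *\<^sub>v v = 0\<^sub>v m"
    by blast
  hence "A\<^sup>T * A = B\<^sup>T * B \<and> (A + B) * (A - B)\<^sup>T = 0\<^sub>m m m"
    by (rule gram_mates_of_right_singular_basis[OF AB])
  thus ?P1 using gram_of_sum_mult_diff_transpose_eq_0[OF AB] zo unfolding gram_mates_def by blast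
qed

(* The left singular vectors of A are the right singular vectors of A^T, and the column
   space of A - B is the row space of its transpose. *)
lemma gram_mates_iff_left_singular_basis:
  fixes A B :: "real mat"
  assumes AB: "A \<in> carrier_mat m n" "B \<in> carrier_mat m n"
    and zo: "zero_one_mat A" "zero_one_mat B" "A \<noteq> B"
  shows "gram_mates A B \<and> (A - B)\<^sup>T * (A + B) = 0\<^sub>m n n \<longleftrightarrow>
    (\<exists>us. length us = vec_space.rank m (A - B) \<and>
       (\<forall>u\<in>set us. \<exists>\<sigma>>0. left_singular_vector m n A \<sigma> u) \<and>
       vec_space.is_basis_list m us (vec_space.col_space m (A - B)) \<and>
       (\<forall>u\<in>set us. (A + B)\<^sup>T *\<^sub>v u = 0\<^sub>v n))"
proof -
  have ABT: "A\<^sup>T \<in> carrier_mat n m" "B\<^sup>T \<in> carrier_mat n m" using AB by auto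
  have zoT: "zero_one_mat A\<^sup>T" "zero_one_mat B\<^sup>T" "A\<^sup>T \<noteq> B\<^sup>T"
    using zo unfolding zero_one_mat_def by auto
  have diffT: "A\<^sup>T - B\<^sup>T = (A - B)\<^sup>T" and sumT: "A\<^sup>T + B\<^sup>T = (A + B)\<^sup>T"
    using transpose_minus[OF AB] transpose_add[OF AB] by simp_all
  have DT: "(A - B)\<^sup>T \<in> carrier_mat n m" and C: "A + B \<in> carrier_mat m n" using AB by auto
  have "(A\<^sup>T + B\<^sup>T) * (A\<^sup>T - B\<^sup>T)\<^sup>T = ((A - B)\<^sup>T * (A + B))\<^sup>T"
    unfolding diffT sumT using transpose_mult[OF DT C] by simp
  moreover have "(A - B)\<^sup>T * (A + B) \<in> carrier_mat n n" using DT C by auto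
  ultimately have orth: "(A\<^sup>T + B\<^sup>T) * (A\<^sup>T - B\<^sup>T)\<^sup>T = 0\<^sub>m n n \<longleftrightarrow> (A - B)\<^sup>T * (A + B) = 0\<^sub>m n n"
    using transpose_mat_eq_0_iff by simp
  have sv: "right_singular_vector n m A\<^sup>T \<sigma> u \<longleftrightarrow> left_singular_vector m n A \<sigma> u" for \<sigma> u
    unfolding left_singular_vector_def right_singular_vector_def singular_triple_def by auto
  have rank: "vec_space.rank n (A\<^sup>T - B\<^sup>T) = vec_space.rank m (A - B)"
    unfolding diffT by (rule real_rank_transpose) (use AB in auto)
  have space: "vec_space.row_space m (A\<^sup>T - B\<^sup>T) = vec_space.col_space m (A - B)"
    unfolding diffT by (rule vec_space.col_space_eq_row_space_transpose[symmetric])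
  show ?thesis
    using gram_mates_iff_right_singular_basis[OF ABT zoT] unfolding gram_mates_transpose orth sv rank space
    unfolding sumT[symmetric] by simp
qed

theorem corollary3p10:
  fixes A B :: "real mat" and m n k :: nat
  assumes "A \<in> carrier_mat m n" and "B \<in> carrier_mat m n"
    and "zero_one_mat A" and "zero_one_mat B" and "A \<noteq> B"
    and "k = vec_space.rank m (A - B)"
  defines "P1 \<equiv> gram_mates A B \<and> (A + B) * (A - B)\<^sup>T = 0\<^sub>m m m"
    and "P2 \<equiv> gram_mates A B \<and> (A - B)\<^sup>T * (A + B) = 0\<^sub>m n n"
    and "P3 \<equiv> sign_change_sv m n k A B"
    and "P4 \<equiv> (\<exists>vs. length vs = k \<and>
               (\<forall>v\<in>set vs. \<exists>\<sigma>>0. right_singular_vector m n A \<sigma> v) \<and>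
               vec_space.is_basis_list n vs (vec_space.row_space n (A - B)) \<and>
               (\<forall>v\<in>set vs. (A + B) *\<^sub>v v = 0\<^sub>v m))"
    and "P5 \<equiv> (\<exists>us. length us = k \<and>
               (\<forall>u\<in>set us. \<exists>\<sigma>>0. left_singular_vector m n A \<sigma> u) \<and>
               vec_space.is_basis_list m us (vec_space.col_space m (A - B)) \<and>
               (\<forall>u\<in>set us. (A + B)\<^sup>T *\<^sub>v u = 0\<^sub>v n))"
    and "P6 \<equiv> gram_mates A B \<and> (A * (A - B)\<^sup>T)\<^sup>T = A * (A - B)\<^sup>T"
    and "P7 \<equiv> gram_mates A B \<and> (A\<^sup>T * (A - B))\<^sup>T = A\<^sup>T * (A - B)"
  shows "(P1 \<longleftrightarrow> P2) \<and> (P2 \<longleftrightarrow> P3) \<and> (P3 \<longleftrightarrow> P4) \<and> (P4 \<longleftrightarrow> P5)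
         \<and> (P5 \<longleftrightarrow> P6) \<and> (P6 \<longleftrightarrow> P7)"
proof -
  have AB: "A \<in> carrier_mat m n" "B \<in> carrier_mat m n" by fact+
  have sym: "A * B\<^sup>T = B * A\<^sup>T \<longleftrightarrow> A\<^sup>T * B = B\<^sup>T * A" if "gram_mates A B"
    using gram_mates_symmetric_iff[OF AB] that unfolding gram_mates_def by blast
  have P1: "P1 \<longleftrightarrow> gram_mates A B \<and> A * B\<^sup>T = B * A\<^sup>T"
    unfolding P1_def gram_mates_def using sum_mult_diff_transpose_eq_0_iff[OF AB] by blast
  have P2: "P2 \<longleftrightarrow> gram_mates A B \<and> A\<^sup>T * B = B\<^sup>T * A"
    unfolding P2_def gram_mates_def using diff_transpose_mult_sum_eq_0_iff[OF AB] by blast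
  have P6: "P6 \<longleftrightarrow> gram_mates A B \<and> A * B\<^sup>T = B * A\<^sup>T"
    unfolding P6_def using mult_diff_transpose_symmetric_iff[OF AB] by blast
  have P7: "P7 \<longleftrightarrow> gram_mates A B \<and> A\<^sup>T * B = B\<^sup>T * A"
    unfolding P7_def using transpose_mult_diff_symmetric_iff[OF AB] by blast
  have "P1 \<longleftrightarrow> P3"
    unfolding P1_def P3_def using gram_mates_iff_sign_change_sv[OF AB assms(3-6)] .
  moreover have "P1 \<longleftrightarrow> P4"
    unfolding P1_def P4_def using gram_mates_iff_right_singular_basis[OF AB assms(3-5)] assms(6) by simp
  moreover have "P2 \<longleftrightarrow> P5"
    unfolding P2_def P5_def using gram_mates_iff_left_singular_basis[OF AB assms(3-5)] assms(6) by simp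
  ultimately show ?thesis using P1 P2 P6 P7 sym by blast
qed

end
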